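(* Let $K$ be a number field, $\mathfrak{p}$ a prime of $K$ above a rational prime $p\ge3$, $K_{\mathfrak{p}}$ the completion, $\mathfrak{o}_v$ its valuation ring, and let $N\ge2$. Let $Y=\mathfrak{o}_v^N$ be the $N$-dimensional unit disk, $F:Y\to Y$ an endomorphism defined over $K_{\mathfrak{p}}$, $V'\subseteq Y$ an analytic subvariety defined over $K_{\mathfrak{p}}$, and $a\in Y(\mathfrak{o}_v)$. Assume: (1) $a=(a_1,\dots,a_N)$ with each $a_i\in\mathfrak{p}$; (2) $F=(F_1,\dots,F_N)$ with $F_i\in\mathfrak{o}_v\langle x_1,\dots,x_N\rangle$, and for each $i$, $F_i(x)\equiv\sum_{j=1}^N a_{ij}x_j\pmod{\mathfrak{p}}$ with $a_{ij}\in\mathfrak{o}_v$, where the matrix $A=(a_{ij})$ satisfies $A^2=A$; (3) there are $c>1/(p-1)$ and $g\in\mathfrak{o}_v\langle x_1,\dots,x_N,z\rangle^N$ with $\|g(x,n)-F^n(x)\|\le p^{-nc}$ for all $n\in\mathbb{Z}_{\ge0}$; setting $G(n)=g(a,n)$ for $n\in\mathfrak{o}_v$, there is no $M\in\mathbb{N}$ such that $G(n)\in V'$ for all $n\ge M$; (4) for every $n\in\mathbb{N}$, the orbit of $a$ under $F^n$ does not converge $\mathfrak{p}$-adically to a periodic point of $F$ lying on $V'$. Then the set $S_{V'}:=\{n\in\mathbb{N}_{\ge0}:~F^n(a)\in V'(K_{\mathfrak{p}})\}$ satisfies, for every fixed $m\in\mathbb{N}_{>0}$, $$\#\{i\le n:~i\in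 S_{V'}\}=o(\log^{(m)}(n))\quad\text{as } n\to\infty,$$ where $\log^{(m)}$ is the $m$-th iterated logarithm.
   Context: For $h\in\mathfrak{o}_v[x_1,\dots,x_m]$, $\|h\|$ is the supremum of the $\mathfrak{p}$-adic absolute values of its coefficients, and $\mathfrak{o}_v\langle x_1,\dots,x_m\rangle$ (the Tate algebra) is the completion of $\mathfrak{o}_v[x_1,\dots,x_m]$ with respect to $\|\cdot\|$, i.e. power series whose coefficients tend to $0$. For vectors, $\|(y_1,\dots,y_N)\|=\max_i|y_i|_{\mathfrak{p}}$, and the norm of a tuple of power series is the maximum of the norms of its entries. Congruence modulo $\mathfrak{p}$ of power series is coefficientwise. *)

theory Defs
  imports Complex_Main "HOL-Library.Landau_Symbols" "HOL-Computational_Algebra.Primes"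
begin

text \<open>Abstract model of K_p: a field with a non-archimedean absolute value av,
 normalised by av p = 1/p, complete, discretely valued, with finite residue field.\<close>

definition nonarch_local_field :: "('k::field \<Rightarrow> real) \<Rightarrow> nat \<Rightarrow> bool" where
  "nonarch_local_field av p \<longleftrightarrow>
     (\<forall>x. 0 \<le> av x) \<and> (\<forall>x. av x = 0 \<longleftrightarrow> x = 0) \<and>
     (\<forall>x y. av (x * y) = av x * av y) \<and>
     (\<forall>x y. av (x + y) \<le> max (av x) (av y)) \<and>
     av (of_nat p) = 1 / real p \<and>
     (\<forall>s. (\<forall>e>0. \<exists>M. \<forall>m\<ge>M. \<forall>n\<ge>M. av (s m - s n) < e) \<longrightarrow>
          (\<exists>L. (\<lambda>n. av (s n - L)) \<longlonglongrightarrow> 0)) \<and>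
     (\<exists>\<pi>. av \<pi> < 1 \<and> (\<forall>x. av x < 1 \<longrightarrow> av x \<le> av \<pi>)) \<and>
     (\<exists>R. finite R \<and> (\<forall>x. av x \<le> 1 \<longrightarrow> (\<exists>r\<in>R. av (x - r) < 1)))"

definition av_lim :: "('k::field \<Rightarrow> real) \<Rightarrow> (nat \<Rightarrow> 'k) \<Rightarrow> 'k" where
  "av_lim av s = (THE L. (\<lambda>n. av (s n - L)) \<longlonglongrightarrow> 0)"

definition multi :: "nat \<Rightarrow> (nat \<Rightarrow> nat) set" where
  "multi m = {\<alpha>. \<forall>i\<ge>m. \<alpha> i = 0}"

definition mdeg :: "nat \<Rightarrow> (nat \<Rightarrow> nat) \<Rightarrow> nat" where
  "mdeg m \<alpha> = (\<Sum>i<m. \<alpha> i)"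

type_synonym 'k ser = "(nat \<Rightarrow> nat) \<Rightarrow> 'k"

definition ser_one :: "'k::comm_ring_1 ser" where
  "ser_one \<beta> = (if \<beta> = (\<lambda>_. 0) then 1 else 0)"

definition ser_const :: "'k::comm_ring_1 \<Rightarrow> 'k ser" where
  "ser_const c \<beta> = (if \<beta> = (\<lambda>_. 0) then c else 0)"

definition ser_var :: "nat \<Rightarrow> 'k::comm_ring_1 ser" where
  "ser_var i \<beta> = (if \<beta> = (\<lambda>j. if j = i then 1 else 0) then 1 else 0)"

definition ser_mult :: "'k::comm_ring_1 ser \<Rightarrow> 'k ser \<Rightarrow> 'k ser" where
  "ser_mult f g \<beta> = (\<Sum>\<alpha>\<in>{\<alpha>. \<forall>i. \<alpha> i \<le> \<beta> i}. f \<alpha> * g (\<lambda>i. \<beta> i - \<alpha> i))"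

definition ser_pow :: "'k::comm_ring_1 ser \<Rightarrow> nat \<Rightarrow> 'k ser" where
  "ser_pow f k = (ser_mult f ^^ k) ser_one"

fun ser_prodp :: "(nat \<Rightarrow> 'k::comm_ring_1 ser) \<Rightarrow> (nat \<Rightarrow> nat) \<Rightarrow> nat \<Rightarrow> 'k ser" where
  "ser_prodp h \<alpha> 0 = ser_one"
| "ser_prodp h \<alpha> (Suc j) = ser_mult (ser_prodp h \<alpha> j) (ser_pow (h j) (\<alpha> j))"

definition ser_subst :: "('k::field \<Rightarrow> real) \<Rightarrow> nat \<Rightarrow> 'k ser \<Rightarrow> (nat \<Rightarrow> 'k ser) \<Rightarrow> 'k ser" where
  "ser_subst av m f h = (\<lambda>\<beta>. av_lim av
      (\<lambda>d. \<Sum>\<alpha>\<in>{\<alpha>\<in>multi m. mdeg m \<alpha> \<le> d}. f \<alpha> * ser_prodp h \<alpha> m \<beta>))"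

definition ser_eval :: "('k::field \<Rightarrow> real) \<Rightarrow> nat \<Rightarrow> 'k ser \<Rightarrow> (nat \<Rightarrow> 'k) \<Rightarrow> 'k" where
  "ser_eval av m f x = ser_subst av m f (\<lambda>i. ser_const (x i)) (\<lambda>_. 0)"

definition tate :: "('k::field \<Rightarrow> real) \<Rightarrow> nat \<Rightarrow> 'k ser \<Rightarrow> bool" where
  "tate av m f \<longleftrightarrow> (\<forall>\<alpha>. \<alpha> \<notin> multi m \<longrightarrow> f \<alpha> = 0) \<and> (\<forall>\<alpha>. av (f \<alpha>) \<le> 1) \<and>
     (\<forall>e>0. finite {\<alpha>. e \<le> av (f \<alpha>)})"

definition tuple_gnorm :: "('k::field \<Rightarrow> real) \<Rightarrow> nat \<Rightarrow> nat \<Rightarrow> (nat \<Rightarrow> 'k ser) \<Rightarrow> real" where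
  "tuple_gnorm av m N u = Sup ((\<lambda>(i, \<alpha>). av (u i \<alpha>)) ` ({..<N} \<times> multi m))"

definition disk :: "('k::field \<Rightarrow> real) \<Rightarrow> nat \<Rightarrow> (nat \<Rightarrow> 'k) set" where
  "disk av N = {x. (\<forall>i<N. av (x i) \<le> 1) \<and> (\<forall>i\<ge>N. x i = 0)}"

definition pt_dist :: "('k::field \<Rightarrow> real) \<Rightarrow> nat \<Rightarrow> (nat \<Rightarrow> 'k) \<Rightarrow> (nat \<Rightarrow> 'k) \<Rightarrow> real" where
  "pt_dist av N x y = Max ((\<lambda>i. av (x i - y i)) ` {..<N})"

definition analytic_subvariety :: "('k::field \<Rightarrow> real) \<Rightarrow> nat \<Rightarrow> (nat \<Rightarrow> 'k) set \<Rightarrow> bool" where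
  "analytic_subvariety av N V \<longleftrightarrow>
     (\<exists>H. finite H \<and> (\<forall>h\<in>H. tate av N h) \<and>
          V = {x \<in> disk av N. \<forall>h\<in>H. ser_eval av N h x = 0})"

definition Fmap :: "('k::field \<Rightarrow> real) \<Rightarrow> nat \<Rightarrow> (nat \<Rightarrow> 'k ser) \<Rightarrow> (nat \<Rightarrow> 'k) \<Rightarrow> (nat \<Rightarrow> 'k)" where
  "Fmap av N F x = (\<lambda>i. if i < N then ser_eval av N (F i) x else 0)"

fun ser_iter :: "('k::field \<Rightarrow> real) \<Rightarrow> nat \<Rightarrow> (nat \<Rightarrow> 'k ser) \<Rightarrow> nat \<Rightarrow> nat \<Rightarrow> 'k ser" where
  "ser_iter av N F 0 = (\<lambda>i. ser_var i)"
| "ser_iter av N F (Suc n) = (\<lambda>i. ser_subst av N (F i) (ser_iter av N F n))"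

definition lin_ser :: "nat \<Rightarrow> (nat \<Rightarrow> nat \<Rightarrow> 'k::comm_ring_1) \<Rightarrow> nat \<Rightarrow> 'k ser" where
  "lin_ser N A i = (\<lambda>\<beta>. \<Sum>j<N. A i j * ser_var j \<beta>)"

text \<open>g(x, n): substitute z := n (variable index N) into g in N+1 variables.\<close>
definition zsub :: "nat \<Rightarrow> 'k::comm_ring_1 \<Rightarrow> nat \<Rightarrow> 'k ser" where
  "zsub N t = (\<lambda>j. if j < N then ser_var j else ser_const t)"

definition Gpt :: "('k::field \<Rightarrow> real) \<Rightarrow> nat \<Rightarrow> (nat \<Rightarrow> 'k ser) \<Rightarrow> (nat \<Rightarrow> 'k) \<Rightarrow> 'k \<Rightarrow> (nat \<Rightarrow> 'k)" where
  "Gpt av N g a t = (\<lambda>i. if i < N then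
      ser_eval av (Suc N) (g i) (\<lambda>j. if j < N then a j else if j = N then t else 0) else 0)"

end

theory Submission
  imports Defs
begin

(* Since G(n) = g(a, n) is not eventually in V', some equation h of V' satisfies
   h(G(n0)) \<noteq> 0. The map t \<mapsto> h(G(t)) on the unit disk is a nonzero power series \<Psi> in
   one variable with coefficients in o_v, and since G(n) is p^(-n c)-close to F^n(a), every n with
   F^n(a) \<in> V' satisfies |\<Psi>(n)| \<le> p^(-n c). A Strassmann-type argument with divided differences
   shows that \<Psi> cannot be that small at e + 1 integers in [t, n] (e the Weierstrass degree of \<Psi>)
   unless n^e grows exponentially in t. So all but e of the hits up to n lie below K log n, and
   iterating this recursion bounds their number by O(log^(m+1) n) = o(log^(m) n) for every m. *)

section \<open>Iterated logarithms\<close>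

definition count_upto :: "nat set \<Rightarrow> nat \<Rightarrow> nat" where
  "count_upto T n = card {i. i \<le> n \<and> i \<in> T}"

lemma count_upto_le: "real (count_upto T n) \<le> real n + 1"
proof -
  have "count_upto T n \<le> card {..n}" unfolding count_upto_def by (rule card_mono) auto
  then show ?thesis by simp
qed

lemma ln_funpow_mono:
  "(exp ^^ m) 0 \<le> x \<Longrightarrow> x \<le> y \<Longrightarrow> (ln ^^ m) x \<le> (ln ^^ m) (y::real)"
proof (induction m arbitrary: x y)
  case 0 then show ?case by simp
next
  case (Suc m)
  have x_pos: "x > 0" using Suc.prems(1) by (simp add: less_le_trans[OF exp_gt_zero])
  have "(exp ^^ m) 0 \<le> ln x" using Suc.prems(1) x_pos by (simp add: ln_ge_iff)
  moreover have "ln x \<le> ln y" using x_pos Suc.prems(2) by simp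
  ultimately have "(ln ^^ m) (ln x) \<le> (ln ^^ m) (ln y)" by (rule Suc.IH)
  then show ?case by (simp only: funpow_Suc_right o_apply)
qed

lemma ln_funpow_at_top: "filterlim (ln ^^ m) at_top (at_top :: real filter)"
proof (induction m)
  case 0 then show ?case by (simp add: filterlim_ident)
next
  case (Suc m)
  then show ?case unfolding funpow_Suc_right comp_def by (rule filterlim_compose[OF _ ln_at_top])
qed

lemma eventually_ln_ge: "eventually (\<lambda>y. c \<le> ln y) (at_top :: real filter)"
  using ln_at_top unfolding filterlim_at_top by blast

lemma ln_funpow_mult_le:
  fixes K :: real
  assumes "K > 0"
  shows "\<exists>D. eventually (\<lambda>y. (ln ^^ Suc k) (K * y) \<le> (ln ^^ Suc k) y + D) at_top"
  using assms
proof (induction k arbitrary: K)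
  case 0
  have "eventually (\<lambda>y. ln (K * y) \<le> ln y + ln K) at_top"
    using eventually_gt_at_top[of "0::real"] by eventually_elim (use 0 in \<open>simp add: ln_mult\<close>)
  then show ?case by auto
next
  case (Suc k)
  obtain D where D: "eventually (\<lambda>y. (ln ^^ Suc k) (2 * y :: real) \<le> (ln ^^ Suc k) y + D) at_top"
    using Suc.IH[of 2] by auto
  have "eventually (\<lambda>y::real. (ln ^^ Suc k) (2 * ln y) \<le> (ln ^^ Suc k) (ln y) + D) at_top"
    using filterlim_iff[THEN iffD1, OF ln_at_top] D by blast
  moreover have "eventually (\<lambda>y::real. \<bar>ln K\<bar> + \<bar>(exp ^^ Suc k) 0\<bar> \<le> ln y) at_top"
    by (rule eventually_ln_ge)
  moreover have "eventually (\<lambda>y::real. 0 < y) at_top" by (rule eventually_gt_at_top)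
  ultimately have "eventually (\<lambda>y. (ln ^^ Suc (Suc k)) (K * y) \<le> (ln ^^ Suc (Suc k)) y + D) at_top"
  proof eventually_elim
    case (elim y)
    have "(ln ^^ Suc (Suc k)) (K * y) = (ln ^^ Suc k) (ln K + ln y)"
      using elim(3) Suc.prems by (simp only: funpow_Suc_right o_apply) (simp add: ln_mult)
    also have "\<dots> \<le> (ln ^^ Suc k) (2 * ln y)"
    proof (rule ln_funpow_mono)
      show "(exp ^^ Suc k) 0 \<le> ln K + ln y" "ln K + ln y \<le> 2 * ln y" using elim(2) by linarith+
    qed
    also have "\<dots> \<le> (ln ^^ Suc (Suc k)) y + D"
      using elim(1) by (simp only: funpow_Suc_right o_apply)
    finally show ?case .
  qed
  then show ?case by blast
qed

lemma filterlim_nat_floor_mult_ln: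
  fixes K :: real
  assumes "K > 0"
  shows "filterlim (\<lambda>n. nat \<lfloor>K * ln (real n)\<rfloor>) sequentially sequentially"
proof -
  have "filterlim (\<lambda>n. K * ln (real n)) at_top sequentially"
    by (intro filterlim_tendsto_pos_mult_at_top[OF tendsto_const assms]
        filterlim_compose[OF ln_at_top filterlim_real_sequentially])
  then show ?thesis
    by (intro filterlim_compose[OF filterlim_nat_sequentially]
        filterlim_compose[OF filterlim_floor_sequentially])
qed

text \<open>f n \<le> f (K ln n) + E \<le> C ln^(k+1) (K ln n) + D + E, and ln^(k+1) (K y) exceeds
  ln^(k+1) y by at most a constant.\<close>

lemma iterated_ln_bound_Suc:
  fixes f :: "nat \<Rightarrow> real" and K :: real
  assumes K: "K > 0" and C: "C \<ge> 0"
    and step: "eventually (\<lambda>n. f n \<le> f (nat \<lfloor>K * ln (real n)\<rfloor>) + E) sequentially"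
    and bound: "eventually (\<lambda>n. f n \<le> C * (ln ^^ Suc k) (real n) + D) sequentially"
  shows "\<exists>D'. eventually (\<lambda>n. f n \<le> C * (ln ^^ Suc (Suc k)) (real n) + D') sequentially"
proof -
  define L where "L n = nat \<lfloor>K * ln (real n)\<rfloor>" for n
  have L_lim: "filterlim L sequentially sequentially"
    unfolding L_def by (rule filterlim_nat_floor_mult_ln[OF K])
  obtain DK where DK: "eventually (\<lambda>y. (ln ^^ Suc k) (K * y) \<le> (ln ^^ Suc k) y + DK) at_top"
    using ln_funpow_mult_le[OF K] by blast
  have "eventually (\<lambda>n. f (L n) \<le> C * (ln ^^ Suc k) (real (L n)) + D) sequentially"
    using filterlim_iff[THEN iffD1, OF L_lim] bound by blast
  moreover have "eventually (\<lambda>n. (exp ^^ Suc k) 0 \<le> real (L n)) sequentially"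
    using filterlim_compose[OF filterlim_real_sequentially L_lim]
    unfolding filterlim_at_top by blast
  moreover have "eventually (\<lambda>n.
      (ln ^^ Suc k) (K * ln (real n)) \<le> (ln ^^ Suc (Suc k)) (real n) + DK) sequentially"
    using DK filterlim_iff[THEN iffD1, OF filterlim_compose[OF ln_at_top filterlim_real_sequentially]]
    by (auto simp only: funpow_Suc_right o_apply)
  ultimately have "eventually (\<lambda>n.
      f n \<le> C * (ln ^^ Suc (Suc k)) (real n) + (C * DK + D + E)) sequentially"
    using step eventually_ge_at_top[of 1]
  proof eventually_elim
    case (elim n)
    have "0 \<le> K * ln (real n)" using K elim(5) by simp
    then have "real (L n) \<le> K * ln (real n)" unfolding L_def by linarith
    then have "(ln ^^ Suc k) (real (L n)) \<le> (ln ^^ Suc k) (K * ln (real n))"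
      using elim(2) by (rule ln_funpow_mono[rotated])
    then have "f (L n) \<le> C * ((ln ^^ Suc (Suc k)) (real n) + DK) + D"
      using elim(1,3) C by (smt (verit) mult_left_mono)
    then show ?case using elim(4) unfolding L_def by (simp add: algebra_simps)
  qed
  then show ?thesis by blast
qed

lemma iterated_ln_bound:
  fixes f :: "nat \<Rightarrow> real" and K :: real
  assumes K: "K > 0" and f_le: "\<And>n. f n \<le> real n + 1"
    and step: "eventually (\<lambda>n. f n \<le> f (nat \<lfloor>K * ln (real n)\<rfloor>) + E) sequentially"
  shows "\<exists>C \<ge> 0. \<exists>D. eventually (\<lambda>n. f n \<le> C * (ln ^^ Suc k) (real n) + D) sequentially"
proof (induction k)
  case 0
  have "eventually (\<lambda>n. f n \<le> K * ln (real n) + (1 + E)) sequentially"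
    using step eventually_ge_at_top[of 1]
  proof eventually_elim
    case (elim n)
    have "0 \<le> K * ln (real n)" using K elim(2) by simp
    then have "real (nat \<lfloor>K * ln (real n)\<rfloor>) \<le> K * ln (real n)" by linarith
    then show ?case using elim(1) f_le[of "nat \<lfloor>K * ln (real n)\<rfloor>"] by linarith
  qed
  then show ?case using K by (intro exI[of _ K] conjI exI[of _ "1 + E"]) auto
next
  case (Suc k)
  then obtain C D where "C \<ge> 0"
    and "eventually (\<lambda>n. f n \<le> C * (ln ^^ Suc k) (real n) + D) sequentially"
    by blast
  with iterated_ln_bound_Suc[OF K _ step] show ?case by blast
qed

lemma smallo_iterated_ln_if_bound:
  fixes f :: "nat \<Rightarrow> real"
  assumes nonneg: "\<And>n. 0 \<le> f n"
    and bound: "eventually (\<lambda>n. f n \<le> C * (ln ^^ Suc (Suc m)) (real n) + D) sequentially"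
  shows "f \<in> o(\<lambda>n. (ln ^^ Suc m) (real n))"
proof -
  have Y_lim: "filterlim (\<lambda>n. (ln ^^ Suc m) (real n)) at_top sequentially"
    by (rule filterlim_compose[OF ln_funpow_at_top filterlim_real_sequentially])
  have "(\<lambda>y::real. C * ln y + D) \<in> o(\<lambda>y. y)"
  proof (rule sum_in_smallo)
    have "(\<lambda>y::real. ln y) \<in> o(\<lambda>y. y)"
      by (rule smalloI_tendsto[OF ln_x_over_x_tendsto_0]) (auto intro: eventually_gt_at_top)
    then show "(\<lambda>y::real. C * ln y) \<in> o(\<lambda>y. y)" by (cases "C = 0") simp_all
    have "((\<lambda>y::real. D / y) \<longlongrightarrow> 0) at_top"
      using tendsto_const filterlim_at_top_imp_at_infinity[OF filterlim_ident]
      by (rule tendsto_divide_0)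
    then show "(\<lambda>y::real. D) \<in> o(\<lambda>y. y)"
      by (rule smalloI_tendsto) (auto intro: eventually_mono[OF eventually_gt_at_top[of 0]])
  qed
  then have "(\<lambda>n. C * (ln ^^ Suc (Suc m)) (real n) + D) \<in> o(\<lambda>n. (ln ^^ Suc m) (real n))"
    unfolding funpow.simps(2)[where n = "Suc m"] o_apply
    by (rule landau_o.small.compose[OF _ Y_lim])
  moreover have "f \<in> O(\<lambda>n. C * (ln ^^ Suc (Suc m)) (real n) + D)"
    using bound by (intro bigoI[of _ 1])
      (auto elim!: eventually_mono intro: order_trans[OF _ abs_ge_self] simp: nonneg)
  ultimately show ?thesis by (rule landau_o.big_small_trans[rotated])
qed

lemma le_mult_ln_if_exp_le:
  fixes lam c :: real and e n t :: nat
  assumes lam: "lam > 0" and c: "c > 0" and n: "3 \<le> n"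
    and t: "lam * exp (c * real t) \<le> real n ^ e"
  shows "real t \<le> ((real e + \<bar>ln lam\<bar>) / c + 1) * ln (real n)"
proof -
  have "exp 1 \<le> real n" using exp_le n by linarith
  then have ln_n: "1 \<le> ln (real n)" using n by (simp add: ln_ge_iff)
  have "ln lam + c * real t \<le> real e * ln (real n)"
    using ln_mono[OF t] lam n by (simp add: ln_mult ln_realpow)
  moreover have "\<bar>ln lam\<bar> \<le> \<bar>ln lam\<bar> * ln (real n)"
    using mult_left_mono[OF ln_n, of "\<bar>ln lam\<bar>"] by simp
  ultimately have "c * real t \<le> (real e + \<bar>ln lam\<bar>) * ln (real n)"
    by (simp add: distrib_right)
  also have "\<dots> \<le> c * ((real e + \<bar>ln lam\<bar>) / c + 1) * ln (real n)"
    using c ln_n by (intro mult_right_mono) (simp_all add: field_simps)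
  finally show ?thesis using c by (simp add: mult.assoc)
qed

lemma count_upto_le_count_upto_ln:
  fixes T :: "nat set" and lam c :: real and e :: nat
  assumes lam: "lam > 0" and c: "c > 0"
    and sparse: "\<And>t n. t \<in> T \<Longrightarrow> 1 \<le> n \<Longrightarrow> e + 1 \<le> card (T \<inter> {t..n}) \<Longrightarrow>
                   lam * exp (c * real t) \<le> real n ^ e"
  obtains K where "K > 0" and "eventually (\<lambda>n. real (count_upto T n) \<le>
                    real (count_upto T (nat \<lfloor>K * ln (real n)\<rfloor>)) + real e) sequentially"
proof -
  define K where "K = (real e + \<bar>ln lam\<bar>) / c + 1"
  have K: "K > 0" unfolding K_def using c by (simp add: add_nonneg_pos)
  have early: "real t \<le> K * ln (real n)"
    if "3 \<le> n" "lam * exp (c * real t) \<le> real n ^ e" for t n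
    using le_mult_ln_if_exp_le[OF lam c that] unfolding K_def .
  have bound: "count_upto T n \<le> count_upto T (nat \<lfloor>K * ln (real n)\<rfloor>) + e" if n: "3 \<le> n" for n
  proof -
    define L where "L = nat \<lfloor>K * ln (real n)\<rfloor>"
    have tail: "card (T \<inter> {Suc L..n}) \<le> e"
    proof (rule ccontr)
      assume "\<not> ?thesis"
      then have big: "e + 1 \<le> card (T \<inter> {Suc L..n})" by simp
      then have ne: "T \<inter> {Suc L..n} \<noteq> {}" by auto
      define t where "t = Min (T \<inter> {Suc L..n})"
      have t: "t \<in> T \<inter> {Suc L..n}" unfolding t_def using ne by (intro Min_in) auto
      have "T \<inter> {Suc L..n} \<subseteq> T \<inter> {t..n}" unfolding t_def by auto
      then have "card (T \<inter> {Suc L..n}) \<le> card (T \<inter> {t..n})" by (intro card_mono) auto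
      then have "e + 1 \<le> card (T \<inter> {t..n})" using big by linarith
      then have "real t \<le> K * ln (real n)" using early n sparse t by simp
      then have "t \<le> L" unfolding L_def by linarith
      then show False using t by simp
    qed
    have "{i. i \<le> n \<and> i \<in> T} \<subseteq> {i. i \<le> L \<and> i \<in> T} \<union> (T \<inter> {Suc L..n})" by auto
    then have "count_upto T n \<le> card ({i. i \<le> L \<and> i \<in> T} \<union> (T \<inter> {Suc L..n}))"
      unfolding count_upto_def by (intro card_mono) auto
    also have "\<dots> \<le> count_upto T L + card (T \<inter> {Suc L..n})"
      unfolding count_upto_def by (rule card_Un_le)
    finally show ?thesis using tail unfolding L_def by simp
  qed
  have "eventually (\<lambda>n. real (count_upto T n) \<le>
          real (count_upto T (nat \<lfloor>K * ln (real n)\<rfloor>)) + real e) sequentially"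
    by (rule eventually_mono[OF eventually_ge_at_top[of 3]])
      (use bound in \<open>metis of_nat_add of_nat_le_iff\<close>)
  with K that show thesis by blast
qed

lemma count_upto_smallo_iterated_ln:
  fixes T :: "nat set" and lam c :: real and e :: nat
  assumes "lam > 0" and "c > 0"
    and "\<And>t n. t \<in> T \<Longrightarrow> 1 \<le> n \<Longrightarrow> e + 1 \<le> card (T \<inter> {t..n}) \<Longrightarrow>
           lam * exp (c * real t) \<le> real n ^ e"
  shows "(\<lambda>n. real (count_upto T n)) \<in> o(\<lambda>n. (ln ^^ Suc m) (real n))"
proof -
  obtain K where "K > 0" and step: "eventually (\<lambda>n. real (count_upto T n) \<le>
                    real (count_upto T (nat \<lfloor>K * ln (real n)\<rfloor>)) + real e) sequentially"
    using count_upto_le_count_upto_ln[OF assms] by blast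
  then obtain C D where
    "eventually (\<lambda>n. real (count_upto T n) \<le> C * (ln ^^ Suc (Suc m)) (real n) + D) sequentially"
    using iterated_ln_bound[OF _ count_upto_le step] by blast
  then show ?thesis by (rule smallo_iterated_ln_if_bound[rotated]) simp
qed

section \<open>Multi-indices, monomials and divided differences\<close>

definition monomial :: "nat \<Rightarrow> (nat \<Rightarrow> 'k::comm_ring_1) \<Rightarrow> (nat \<Rightarrow> nat) \<Rightarrow> 'k" where
  "monomial m x \<alpha> = (\<Prod>i<m. x i ^ \<alpha> i)"

definition deg_le :: "nat \<Rightarrow> nat \<Rightarrow> (nat \<Rightarrow> nat) set" where
  "deg_le m d = {\<alpha>\<in>multi m. mdeg m \<alpha> \<le> d}"

lemma mdeg_ge_component: "i < m \<Longrightarrow> \<alpha> i \<le> mdeg m \<alpha>"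
  unfolding mdeg_def by (rule member_le_sum) auto

lemma finite_deg_le: "finite (deg_le m d)"
proof -
  have inj: "inj_on (\<lambda>\<alpha>. map \<alpha> [0..<m]) (deg_le m d)"
  proof (rule inj_onI)
    fix \<alpha> \<beta> assume a: "\<alpha> \<in> deg_le m d" "\<beta> \<in> deg_le m d" "map \<alpha> [0..<m] = map \<beta> [0..<m]"
    show "\<alpha> = \<beta>"
    proof
      fix i show "\<alpha> i = \<beta> i"
      proof (cases "i < m")
        case True
        then show ?thesis using arg_cong[OF a(3), of "\<lambda>xs. xs ! i"] by simp
      next
        case False
        then show ?thesis using a(1,2) unfolding deg_le_def multi_def by simp
      qed
    qed
  qed
  have "(\<lambda>\<alpha>. map \<alpha> [0..<m]) ` deg_le m d \<subseteq> {xs. set xs \<subseteq> {..d} \<and> length xs = m}"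
  proof
    fix xs assume "xs \<in> (\<lambda>\<alpha>. map \<alpha> [0..<m]) ` deg_le m d"
    then obtain \<alpha> where a: "\<alpha> \<in> deg_le m d" "xs = map \<alpha> [0..<m]" by blast
    have "\<alpha> i \<le> d" if "i < m" for i
      using mdeg_ge_component[OF that, of \<alpha>] a(1) unfolding deg_le_def by simp
    then show "xs \<in> {xs. set xs \<subseteq> {..d} \<and> length xs = m}" using a(2) by auto
  qed
  moreover have "finite {xs. set xs \<subseteq> {..d} \<and> length xs = m}"
    by (rule finite_lists_length_eq) simp
  ultimately have "finite ((\<lambda>\<alpha>. map \<alpha> [0..<m]) ` deg_le m d)" by (rule finite_subset)
  then show ?thesis using inj by (rule finite_imageD)
qed

lemma mono_deg_le: "mono (deg_le m)"
  unfolding mono_def deg_le_def by auto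

lemma deg_le_subset_multi: "deg_le m d \<subseteq> multi m"
  unfolding deg_le_def by auto

lemma deg_le_exhaust: "\<alpha> \<in> multi m \<Longrightarrow> \<exists>d. \<alpha> \<in> deg_le m d"
  unfolding deg_le_def by auto

lemma below_subset_deg_le: assumes "\<beta> \<in> multi n" shows "{\<alpha>. \<forall>i. \<alpha> i \<le> \<beta> i} \<subseteq> deg_le n (mdeg n \<beta>)"
proof
  fix \<alpha> assume "\<alpha> \<in> {\<alpha>. \<forall>i. \<alpha> i \<le> \<beta> i}"
  then have le: "\<And>i. \<alpha> i \<le> \<beta> i" by auto
  have "\<alpha> i = 0" if "i \<ge> n" for i
  proof -
    have "\<beta> i = 0" using assms that unfolding multi_def by simp
    then show ?thesis using le[of i] by simp
  qed
  then have "\<alpha> \<in> multi n" unfolding multi_def by simp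
  moreover have "mdeg n \<alpha> \<le> mdeg n \<beta>" unfolding mdeg_def using le by (intro sum_mono) auto
  ultimately show "\<alpha> \<in> deg_le n (mdeg n \<beta>)" unfolding deg_le_def by auto
qed

lemma finite_below: "\<beta> \<in> multi n \<Longrightarrow> finite {\<alpha>. \<forall>i. \<alpha> i \<le> \<beta> i}"
  using below_subset_deg_le finite_deg_le by (meson finite_subset)

lemma below_in_multi: "\<beta> \<in> multi n \<Longrightarrow> \<alpha> \<in> {\<alpha>. \<forall>i. \<alpha> i \<le> \<beta> i} \<Longrightarrow> \<alpha> \<in> multi n"
  using below_subset_deg_le deg_le_subset_multi by blast

lemma zero_in_multi: "(\<lambda>_. 0) \<in> multi m" unfolding multi_def by simp

lemma bij_betw_add_multi:
  "bij_betw (\<lambda>(\<alpha>, \<gamma>). (\<lambda>i. \<alpha> i + \<gamma> i, \<alpha>)) (multi n \<times> multi n)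
     (Sigma (multi n) (\<lambda>\<beta>. {\<alpha>. \<forall>i. \<alpha> i \<le> \<beta> i}))"
  unfolding bij_betw_def
proof
  show "inj_on (\<lambda>(\<alpha>, \<gamma>). (\<lambda>i. \<alpha> i + \<gamma> i, \<alpha>)) (multi n \<times> multi n)"
    by (rule inj_onI) (auto simp: fun_eq_iff)
  have "(\<beta>, \<alpha>) \<in> (\<lambda>(\<alpha>, \<gamma>). (\<lambda>i. \<alpha> i + \<gamma> i, \<alpha>)) ` (multi n \<times> multi n)"
    if "\<beta> \<in> multi n" "\<forall>i. \<alpha> i \<le> \<beta> i" for \<alpha> \<beta>
  proof (rule image_eqI)
    show "(\<beta>, \<alpha>) = (\<lambda>(\<alpha>, \<gamma>). (\<lambda>i. \<alpha> i + \<gamma> i, \<alpha>)) (\<alpha>, \<lambda>i. \<beta> i - \<alpha> i)"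
      using that(2) by (auto simp: fun_eq_iff)
    have "\<alpha> \<in> multi n" using below_in_multi[OF that(1)] that(2) by blast
    moreover have "(\<lambda>i. \<beta> i - \<alpha> i) \<in> multi n" using that(1) unfolding multi_def by auto
    ultimately show "(\<alpha>, \<lambda>i. \<beta> i - \<alpha> i) \<in> multi n \<times> multi n" by simp
  qed
  then show "(\<lambda>(\<alpha>, \<gamma>). (\<lambda>i. \<alpha> i + \<gamma> i, \<alpha>)) ` (multi n \<times> multi n)
      = Sigma (multi n) (\<lambda>\<beta>. {\<alpha>. \<forall>i. \<alpha> i \<le> \<beta> i})"
    unfolding multi_def by auto
qed

lemma monomial_zero: "monomial m x (\<lambda>_. 0) = 1" unfolding monomial_def by simp

lemma monomial_add: "monomial m x (\<lambda>i. \<alpha> i + \<gamma> i) = monomial m x \<alpha> * monomial m x \<gamma>"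
  unfolding monomial_def by (simp add: power_add prod.distrib)

lemma monomial_cong: "(\<And>i. i < m \<Longrightarrow> x i = y i) \<Longrightarrow> monomial m x \<alpha> = monomial m y \<alpha>"
  unfolding monomial_def by (rule prod.cong) auto

definition unary_index :: "nat \<Rightarrow> nat \<Rightarrow> nat" where
  "unary_index k = (\<lambda>i. if i = 0 then k else 0)"

lemma bij_unary_index: "bij_betw unary_index UNIV (multi 1)"
  unfolding bij_betw_def
proof
  show "inj_on unary_index UNIV" unfolding inj_on_def unary_index_def by (metis)
  show "range unary_index = multi 1"
  proof
    show "range unary_index \<subseteq> multi 1" unfolding unary_index_def multi_def by auto
    show "multi 1 \<subseteq> range unary_index"
    proof
      fix \<alpha> assume "\<alpha> \<in> multi 1"
      then have "\<alpha> = unary_index (\<alpha> 0)" unfolding unary_index_def multi_def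
        by (auto simp: fun_eq_iff)
      then show "\<alpha> \<in> range unary_index" by blast
    qed
  qed
qed

lemma monomial_unary_index: "monomial 1 (\<lambda>_. z) (unary_index k) = z ^ k"
  unfolding monomial_def unary_index_def by simp

lemma ser_one_eq_const: "ser_one = ser_const 1"
  by (simp add: fun_eq_iff ser_one_def ser_const_def)

lemma ser_mult_at_0: "ser_mult f g (\<lambda>_. 0) = f (\<lambda>_. 0) * g (\<lambda>_. 0)"
proof -
  have "{\<alpha>::nat\<Rightarrow>nat. \<forall>i. \<alpha> i \<le> (\<lambda>_. 0::nat) i} = {\<lambda>_. 0}" by (auto simp: fun_eq_iff)
  then show ?thesis unfolding ser_mult_def by simp
qed

lemma ser_pow_0: "ser_pow f 0 = ser_one" by (simp add: ser_pow_def)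

lemma ser_pow_Suc: "ser_pow f (Suc k) = ser_mult f (ser_pow f k)" by (simp add: ser_pow_def)

lemma ser_pow_const_at_0: "ser_pow (ser_const c) k (\<lambda>_. 0) = c ^ k"
  by (induction k) (simp_all add: ser_pow_0 ser_pow_Suc ser_mult_at_0 ser_one_def ser_const_def)

lemma ser_prodp_const_at_0: "ser_prodp (\<lambda>i. ser_const (x i)) \<alpha> j (\<lambda>_. 0) = (\<Prod>i<j. x i ^ \<alpha> i)"
  by (induction j) (simp_all add: ser_mult_at_0 ser_one_def ser_pow_const_at_0)

lemma ser_eval_eq_av_lim:
  "ser_eval av m f x = av_lim av (\<lambda>d. \<Sum>\<alpha>\<in>deg_le m d. f \<alpha> * monomial m x \<alpha>)"
  unfolding ser_eval_def ser_subst_def deg_le_def monomial_def ser_prodp_const_at_0 by simp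

lemma ser_subst_eq_av_lim:
  "ser_subst av m f h \<beta> = av_lim av (\<lambda>d. \<Sum>\<alpha>\<in>deg_le m d. f \<alpha> * ser_prodp h \<alpha> m \<beta>)"
  unfolding ser_subst_def deg_le_def by simp

lemma ser_eval_cong: "(\<And>i. i < m \<Longrightarrow> x i = y i) \<Longrightarrow> ser_eval av m f x = ser_eval av m f y"
  unfolding ser_eval_eq_av_lim using monomial_cong[of m x y] by simp

lemma av_le_tuple_gnorm:
  assumes "\<And>i \<alpha>. i < N \<Longrightarrow> av (u i \<alpha>) \<le> B" "i < N" "\<alpha> \<in> multi m"
  shows "av (u i \<alpha>) \<le> tuple_gnorm av m N u"
  unfolding tuple_gnorm_def using assms by (intro cSup_upper bdd_aboveI) force+

lemma disk_av_le_1: "x \<in> disk av N \<Longrightarrow> i < N \<Longrightarrow> av (x i) \<le> 1"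
  unfolding disk_def by blast

fun complete_hsym :: "nat \<Rightarrow> 'a::comm_ring_1 list \<Rightarrow> 'a" where
  "complete_hsym 0 zs = 1"
| "complete_hsym (Suc k) [] = 0"
| "complete_hsym (Suc k) (x # zs) = x * complete_hsym k (x # zs) + complete_hsym (Suc k) zs"

lemma complete_hsym_Cons_diff: "complete_hsym (Suc k) (x # zs) - complete_hsym (Suc k) (y # zs) =
  (x - y) * complete_hsym k (x # y # zs)"
proof (induction k)
  case 0 then show ?case by simp
next
  case (Suc k)
  have "complete_hsym (Suc (Suc k)) (x # zs) - complete_hsym (Suc (Suc k)) (y # zs)
      = x * (complete_hsym (Suc k) (x # zs) - complete_hsym (Suc k) (y # zs)) + (x - y) *
        complete_hsym (Suc k) (y # zs)"
    by (simp add: algebra_simps)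
  also have "\<dots> =
    x * ((x - y) * complete_hsym k (x # y # zs)) + (x - y) * complete_hsym (Suc k) (y # zs)"
    using Suc by simp
  also have "\<dots> = (x - y) * complete_hsym (Suc k) (x # y # zs)" by (simp add: algebra_simps)
  finally show ?case .
qed

lemma complete_hsym_singleton: "complete_hsym k [x] = x ^ k"
  by (induction k) simp_all

fun divdiff :: "('a::field \<Rightarrow> 'a) \<Rightarrow> 'a list \<Rightarrow> 'a" where
  "divdiff f [] = 0"
| "divdiff f [x] = f x"
| "divdiff f (x # y # zs) = (divdiff f (x # zs) - divdiff f (y # zs)) / (x - y)"

lemma list_induct_two_heads:
  assumes "P []" "\<And>x. P [x]" "\<And>x y zs. P (x # zs) \<Longrightarrow> P (y # zs) \<Longrightarrow> P (x # y # zs)"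
  shows "P xs"
proof (induction xs rule: length_induct)
  case (1 xs)
  show ?case
  proof (cases xs)
    case Nil then show ?thesis using assms(1) by simp
  next
    case (Cons x ys)
    show ?thesis
    proof (cases ys)
      case Nil then show ?thesis using Cons assms(2) by simp
    next
      case (Cons y zs)
      have "P (x # zs)" "P (y # zs)" using 1 Cons \<open>xs = x # ys\<close> by auto
      then show ?thesis using assms(3) Cons \<open>xs = x # ys\<close> by simp
    qed
  qed
qed

lemma divdiff_power:
  "distinct zs \<Longrightarrow> zs \<noteq> [] \<Longrightarrow>
    divdiff (\<lambda>z. z ^ j) zs =
      (if length zs \<le> j + 1 then complete_hsym (j + 1 - length zs) zs else 0)"
proof (induction zs rule: list_induct_two_heads)
  case 1 then show ?case by simp
next
  case (2 x) then show ?case by (simp add: complete_hsym_singleton)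
next
  case (3 x y zs)
  have xy: "x \<noteq> y" and dx: "distinct (x # zs)" and dy: "distinct (y # zs)" using "3.prems" by auto
  have IHx: "divdiff (\<lambda>z. z ^ j) (x # zs) =
    (if Suc (length zs) \<le> j + 1 then complete_hsym (j + 1 - Suc (length zs)) (x # zs) else 0)"
    using "3.IH"(1) dx by simp
  have IHy: "divdiff (\<lambda>z. z ^ j) (y # zs) =
    (if Suc (length zs) \<le> j + 1 then complete_hsym (j + 1 - Suc (length zs)) (y # zs) else 0)"
    using "3.IH"(2) dy by simp
  have xy0: "x - y \<noteq> 0" using xy by simp
  show ?case
  proof (cases "length zs + 2 \<le> j + 1")
    case True
    then obtain k where k: "j + 1 - Suc (length zs) = Suc k" "j + 1 - length (x # y # zs) = k"
      by (metis Suc_diff_Suc add_2_eq_Suc' length_Cons less_eq_Suc_le plus_1_eq_Suc)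
    have "divdiff (\<lambda>z. z ^ j) (x # y # zs) =
      (complete_hsym (Suc k) (x # zs) - complete_hsym (Suc k) (y # zs)) / (x - y)"
      using IHx IHy True k by simp
    also have "\<dots> = complete_hsym k (x # y # zs)"
    proof -
      have "complete_hsym (Suc k) (x # zs) - complete_hsym (Suc k) (y # zs) =
        (x - y) * complete_hsym k (x # y # zs)"
        by (rule complete_hsym_Cons_diff)
      then show ?thesis using xy0 by (metis nonzero_mult_div_cancel_left)
    qed
    finally show ?thesis using True k by simp
  next
    case False
    then have "divdiff (\<lambda>z. z ^ j) (x # zs) = divdiff (\<lambda>z. z ^ j) (y # zs)" using IHx IHy
      by (cases "Suc (length zs) \<le> j + 1") auto
    then show ?thesis using False by simp
  qed
qed

lemma divdiff_sum:
  "divdiff (\<lambda>z. \<Sum>k\<in>K. c k * g k z) zs = (\<Sum>k\<in>K. c k * divdiff (g k) zs)"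
proof (induction zs rule: list_induct_two_heads)
  case 1 then show ?case by simp
next
  case (2 x) then show ?case by simp
next
  case (3 x y zs)
  then show ?case
    by (simp add: sum_subtractf[symmetric] sum_divide_distrib right_diff_distrib)
qed

section \<open>Complete non-archimedean absolute values\<close>

locale complete_nonarch_abs =
  fixes av :: "'k::field \<Rightarrow> real"
  assumes nonneg: "\<And>x. 0 \<le> av x"
    and av_eq_0_iff: "\<And>x. av x = 0 \<longleftrightarrow> x = 0"
    and av_mult: "\<And>x y. av (x * y) = av x * av y"
    and ultrametric: "\<And>x y. av (x + y) \<le> max (av x) (av y)"
    and complete: "\<And>s. (\<forall>e>0. \<exists>M. \<forall>m\<ge>M. \<forall>n\<ge>M. av (s m - s n) < e) \<Longrightarrow>
          (\<exists>L. (\<lambda>n. av (s n - L)) \<longlonglongrightarrow> 0)"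
begin

lemma av_0[simp]: "av 0 = 0" using av_eq_0_iff by simp

lemma av_1[simp]: "av 1 = 1"
proof -
  have "av 1 = av 1 * av 1" using av_mult[of 1 1] by simp
  moreover have "av 1 \<noteq> 0" using av_eq_0_iff by simp
  ultimately show ?thesis by simp
qed

lemma av_minus_1[simp]: "av (-1) = 1"
proof -
  have "av (-1) * av (-1) = 1" using av_mult[of "-1" "-1"] by simp
  then have "(av (-1) - 1) * (av (-1) + 1) = 0" by (simp add: algebra_simps)
  moreover have "av (-1) + 1 \<noteq> 0" using nonneg[of "-1"] by linarith
  ultimately show ?thesis by simp
qed

lemma av_minus[simp]: "av (- x) = av x"
  using av_mult[of "-1" x] by simp

lemma av_diff_commute: "av (x - y) = av (y - x)"
  by (metis av_minus minus_diff_eq)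

lemma av_pos: "x \<noteq> 0 \<Longrightarrow> 0 < av x"
  using nonneg[of x] av_eq_0_iff[of x] by linarith

lemma av_inverse: "av (inverse x) = inverse (av x)"
proof (cases "x = 0")
  case True then show ?thesis by simp
next
  case False
  have "av (inverse x) * av x = 1" using av_mult[of "inverse x" x] False by simp
  moreover have "av x \<noteq> 0" using False av_eq_0_iff by simp
  ultimately show ?thesis by (metis inverse_unique mult.commute)
qed

lemma av_divide: "av (x / y) = av x / av y"
  by (simp add: divide_inverse av_mult av_inverse)

lemma av_power: "av (x ^ n) = av x ^ n"
  by (induction n) (simp_all add: av_mult)

lemma av_prod: "av (prod f S) = (\<Prod>i\<in>S. av (f i))"
  by (induction S rule: infinite_finite_induct) (simp_all add: av_mult)

lemma av_add_le: "av x \<le> B \<Longrightarrow> av y \<le> B \<Longrightarrow> av (x + y) \<le> B"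
  using ultrametric[of x y] by simp

lemma av_add_less: "av x < B \<Longrightarrow> av y < B \<Longrightarrow> av (x + y) < B"
  using ultrametric[of x y] by simp

lemma av_diff_le: "av x \<le> B \<Longrightarrow> av y \<le> B \<Longrightarrow> av (x - y) \<le> B"
  using av_add_le[of x B "-y"] by simp

lemma av_diff_less: "av x < B \<Longrightarrow> av y < B \<Longrightarrow> av (x - y) < B"
  using av_add_less[of x B "-y"] by simp

lemma av_sum_le: "0 \<le> B \<Longrightarrow> (\<And>i. i \<in> S \<Longrightarrow> av (f i) \<le> B) \<Longrightarrow> av (sum f S) \<le> B"
  by (induction S rule: infinite_finite_induct) (auto intro!: av_add_le)

lemma av_sum_less: "0 < B \<Longrightarrow> (\<And>i. i \<in> S \<Longrightarrow> av (f i) < B) \<Longrightarrow> av (sum f S) < B"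
  by (induction S rule: infinite_finite_induct) (auto intro!: av_add_less)

lemma av_add_dominant: "av y < av x \<Longrightarrow> av (x + y) = av x"
proof -
  assume a: "av y < av x"
  have "av (x + y) \<le> av x" using ultrametric[of x y] a by simp
  moreover have "av x \<le> max (av (x + y)) (av (-y))" using ultrametric[of "x + y" "-y"] by simp
  ultimately show ?thesis using a by auto
qed

lemma av_of_nat_le_1: "av (of_nat n) \<le> 1"
  by (induction n) (auto intro!: av_add_le)

lemma av_of_int_le_1: "av (of_int n) \<le> 1"
proof -
  have "n = int (nat \<bar>n\<bar>) \<or> n = - int (nat \<bar>n\<bar>)" by arith
  then show ?thesis
    by (metis av_minus av_of_nat_le_1 of_int_minus of_int_of_nat_eq)
qed

lemma av_prod_le_1: "(\<And>i. i \<in> S \<Longrightarrow> av (f i) \<le> 1) \<Longrightarrow> av (prod f S) \<le> 1"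
  unfolding av_prod by (rule prod_le_1) (auto simp: nonneg)

lemma av_mult_le_1: "av x \<le> 1 \<Longrightarrow> av y \<le> 1 \<Longrightarrow> av (x * y) \<le> 1"
  by (simp add: av_mult mult_le_one nonneg)

lemma av_power_le_1: "av x \<le> 1 \<Longrightarrow> av (x ^ n) \<le> 1"
  by (simp add: av_power power_le_one nonneg)

lemma av_mult_le_left: "av x \<le> 1 \<Longrightarrow> av y \<le> d \<Longrightarrow> av (x * y) \<le> d"
  using mult_right_mono[of "av x" 1 "av y"] nonneg[of y] by (simp add: av_mult)

lemma av_mult_le_right: "av x \<le> d \<Longrightarrow> av y \<le> 1 \<Longrightarrow> av (x * y) \<le> d"
  using av_mult_le_left[of y x d] by (simp add: mult.commute)

lemma av_power_diff_le:
  assumes "av x \<le> 1" "av y \<le> 1" "av (x - y) \<le> d"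
  shows "av (x ^ k - y ^ k) \<le> d"
proof (induction k)
  case 0
  then show ?case using assms(3) nonneg[of "x - y"] by simp
next
  case (Suc k)
  have eq: "x ^ Suc k - y ^ Suc k = x * (x ^ k - y ^ k) + (x - y) * y ^ k"
    by (simp add: algebra_simps)
  have a: "av (x * (x ^ k - y ^ k)) \<le> d"
    using Suc assms(1) by (intro av_mult_le_left)
  have b: "av ((x - y) * y ^ k) \<le> d"
    using assms(3) av_power_le_1[OF assms(2), of k] by (intro av_mult_le_right)
  show ?case unfolding eq using a b by (rule av_add_le)
qed

lemma av_prod_diff_le:
  assumes "finite S" "\<And>i. i \<in> S \<Longrightarrow> av (a i) \<le> 1" "\<And>i. i \<in> S \<Longrightarrow> av (b i) \<le> 1"
    "\<And>i. i \<in> S \<Longrightarrow> av (a i - b i) \<le> d" "0 \<le> d"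
  shows "av (prod a S - prod b S) \<le> d"
  using assms
proof (induction S rule: finite_induct)
  case empty then show ?case by simp
next
  case (insert k S)
  have eq: "prod a (insert k S) - prod b (insert k S) =
    a k * (prod a S - prod b S) + (a k - b k) * prod b S"
    using insert(1,2) by (simp add: algebra_simps)
  have ih: "av (prod a S - prod b S) \<le> d" using insert by auto
  have a: "av (a k * (prod a S - prod b S)) \<le> d"
    using ih insert.prems(1)[of k] by (intro av_mult_le_left) auto
  have pb: "av (prod b S) \<le> 1" using insert.prems(2) by (intro av_prod_le_1) auto
  have b: "av ((a k - b k) * prod b S) \<le> d"
    using insert.prems(3)[of k] pb by (intro av_mult_le_right) auto
  show ?case unfolding eq using a b by (rule av_add_le)
qed

lemma av_of_nat_eq_1_if_coprime:
  assumes "coprime p m" and p: "av (of_nat p) < 1"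
  shows "av (of_nat m) = 1"
proof -
  have "gcd (int p) (int m) = 1" using assms(1) by (simp add: coprime_iff_gcd_eq_1)
  then obtain u v :: int where "u * int p + v * int m = 1"
    using bezout_int[of "int p" "int m"] by auto
  then have "(of_int (u * int p + v * int m) :: 'k) = 1" by simp
  then have one: "(1::'k) = of_int u * of_nat p + of_int v * of_nat m" by simp
  have "av (of_int u * (of_nat p :: 'k)) < 1"
    using av_mult_le_left[OF av_of_int_le_1 order_refl] p by (rule le_less_trans)
  then have "1 \<le> av (of_int v * (of_nat m :: 'k))"
    using ultrametric[of "of_int u * of_nat p" "of_int v * of_nat m"] one by simp
  also have "\<dots> \<le> av (of_nat m)" by (rule av_mult_le_left[OF av_of_int_le_1 order_refl])
  finally show ?thesis using av_of_nat_le_1[of m] by simp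
qed

lemma av_of_nat_ge:
  assumes p: "prime p" and av_p: "av (of_nat p) = 1 / real p" and "m \<ge> 1"
  shows "1 / real m \<le> av (of_nat m)"
  using \<open>m \<ge> 1\<close>
proof (induction m rule: less_induct)
  case (less m)
  have p2: "p \<ge> 2" using p by (rule prime_ge_2_nat)
  show ?case
  proof (cases "p dvd m")
    case True
    then obtain k where k: "m = p * k" by blast
    have "k \<ge> 1" using less.prems k by (cases k) auto
    moreover have "k < m" using k p2 calculation by simp
    ultimately have "1 / real k \<le> av (of_nat k)" by (rule less.IH[rotated])
    then have "1 / real p * (1 / real k) \<le> av (of_nat p) * av (of_nat k)"
      unfolding av_p using p2 by (intro mult_left_mono) auto
    then show ?thesis using k by (simp add: av_mult)
  next
    case False
    then have "av (of_nat m) = 1"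
      using av_of_nat_eq_1_if_coprime[OF prime_imp_coprime[OF p]] av_p p2 by simp
    then show ?thesis using less.prems by simp
  qed
qed

lemma av_of_nat_diff_ge:
  assumes av_nat: "\<And>m. 1 \<le> m \<Longrightarrow> 1 / real m \<le> av (of_nat m)"
    and "i \<noteq> j" "i \<le> n" "j \<le> n"
  shows "1 / real n \<le> av (of_nat i - of_nat j :: 'k)"
proof -
  have *: "1 / real n \<le> av (of_nat x - of_nat y :: 'k)" if "y < x" "x \<le> n" for x y
  proof -
    have "1 / real n \<le> 1 / real (x - y)" using that by (simp add: frac_le)
    also have "\<dots> \<le> av (of_nat (x - y) :: 'k)" using av_nat[of "x - y"] that by simp
    finally show ?thesis using that by (simp add: of_nat_diff)
  qed
  show ?thesis
    using *[of i j] *[of j i] assms(2-4) av_diff_commute[of "of_nat i :: 'k"]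
    by (cases "j < i") auto
qed

end

lemma complete_nonarch_abs_if_local_field: "nonarch_local_field av p \<Longrightarrow> complete_nonarch_abs av"
  unfolding nonarch_local_field_def complete_nonarch_abs_def by blast

context complete_nonarch_abs
begin

section \<open>Unconditional summation\<close>

definition av_null :: "('i \<Rightarrow> 'k) \<Rightarrow> 'i set \<Rightarrow> bool" where
  "av_null u I \<longleftrightarrow> (\<forall>e>0. finite {i\<in>I. e \<le> av (u i)})"

definition has_av_sum :: "('i \<Rightarrow> 'k) \<Rightarrow> 'i set \<Rightarrow> 'k \<Rightarrow> bool" where
  "has_av_sum u I L \<longleftrightarrow> (\<forall>e>0. \<exists>F0. finite F0 \<and> F0 \<subseteq> I \<and>
      (\<forall>F. finite F \<longrightarrow> F0 \<subseteq> F \<longrightarrow> F \<subseteq> I \<longrightarrow> av (sum u F - L) < e))"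

lemma has_av_sumE: assumes "has_av_sum u I L" "e > 0"
  obtains F0 where "finite F0" "F0 \<subseteq> I" "\<And>F. finite F \<Longrightarrow> F0 \<subseteq> F \<Longrightarrow> F \<subseteq> I \<Longrightarrow> av (sum u F - L) < e"
  using assms unfolding has_av_sum_def by meson

lemma av_less_all_imp_zero: assumes "\<And>e. e > 0 \<Longrightarrow> av x < e" shows "x = 0"
proof (rule ccontr)
  assume "x \<noteq> 0"
  then have "av x > 0" by (rule av_pos)
  then show False using assms[of "av x"] by simp
qed

lemma has_av_sum_unique: assumes "has_av_sum u I L" "has_av_sum u I M" shows "L = M"
proof -
  have "av (L - M) < e" if e: "e > 0" for e
  proof -
    obtain F1 where F1: "finite F1" "F1 \<subseteq> I"
      "\<And>F. finite F \<Longrightarrow> F1 \<subseteq> F \<Longrightarrow> F \<subseteq> I \<Longrightarrow> av (sum u F - L) < e"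
      by (rule has_av_sumE[OF assms(1) e], blast)
    obtain F2 where F2: "finite F2" "F2 \<subseteq> I"
      "\<And>F. finite F \<Longrightarrow> F2 \<subseteq> F \<Longrightarrow> F \<subseteq> I \<Longrightarrow> av (sum u F - M) < e"
      by (rule has_av_sumE[OF assms(2) e], blast)
    have a: "av (sum u (F1 \<union> F2) - L) < e" using F1 F2 by (intro F1(3)) auto
    have b: "av (sum u (F1 \<union> F2) - M) < e" using F1 F2 by (intro F2(3)) auto
    have "L - M = (sum u (F1 \<union> F2) - M) - (sum u (F1 \<union> F2) - L)" by simp
    then show ?thesis using av_diff_less[OF b a] by simp
  qed
  then show ?thesis using av_less_all_imp_zero[of "L - M"] by simp
qed

lemma av_null_mono: assumes "av_null g I" "\<And>i. i \<in> I \<Longrightarrow> av (f i) \<le> av (g i)" shows "av_null f I"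
  unfolding av_null_def
proof (intro allI impI)
  fix e :: real assume e: "e > 0"
  have "{i\<in>I. e \<le> av (f i)} \<subseteq> {i\<in>I. e \<le> av (g i)}" using assms(2) by force
  then show "finite {i\<in>I. e \<le> av (f i)}"
    using assms(1) e unfolding av_null_def by (meson finite_subset)
qed

lemma av_null_subset:
  assumes "av_null u I" "J \<subseteq> I" shows "av_null u J"
  unfolding av_null_def
proof (intro allI impI)
  fix e :: real assume "e > 0"
  then have "finite {i\<in>I. e \<le> av (u i)}" using assms(1) unfolding av_null_def by blast
  then show "finite {i\<in>J. e \<le> av (u i)}" by (rule finite_subset[rotated]) (use assms(2) in auto)
qed

lemma av_null_bounded: assumes "av_null u I" shows "\<exists>B>0. \<forall>i\<in>I. av (u i) \<le> B"
proof -
  define S where "S = {i\<in>I. 1 \<le> av (u i)}"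
  have fin: "finite S" using assms unfolding av_null_def S_def by simp
  define B where "B = 1 + sum (\<lambda>i. av (u i)) S"
  have B0: "B > 0" unfolding B_def using nonneg by (simp add: add_pos_nonneg sum_nonneg)
  have "av (u i) \<le> B" if "i \<in> I" for i
  proof (cases "i \<in> S")
    case True
    then have "av (u i) \<le> sum (\<lambda>i. av (u i)) S"
      using fin by (intro member_le_sum) (auto simp: nonneg)
    then show ?thesis unfolding B_def by simp
  next
    case False
    then have "av (u i) < 1" using that unfolding S_def by auto
    then show ?thesis unfolding B_def
      using nonneg by (simp add: sum_nonneg add_increasing2 less_imp_le)
  qed
  then show ?thesis using B0 by blast
qed

lemma av_null_level_sums_converge:
  assumes "av_null u I"
  obtains L where "(\<lambda>k. av (sum u {i\<in>I. 1 / real (Suc k) \<le> av (u i)} - L)) \<longlonglongrightarrow> 0"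
proof -
  define A where "A k = {i\<in>I. 1 / real (Suc k) \<le> av (u i)}" for k
  have A_finite: "finite (A k)" for k using assms unfolding av_null_def A_def by simp
  have A_mono: "A k \<subseteq> A k'" if "k \<le> k'" for k k'
  proof -
    have "1 / real (Suc k') \<le> 1 / real (Suc k)" using that by (simp add: frac_le)
    then show ?thesis unfolding A_def by auto
  qed
  have diff: "av (sum u (A n) - sum u (A m)) < 1 / real (Suc M)" if "M \<le> m" "m \<le> n" for M m n
  proof -
    have "av (u i) < 1 / real (Suc M)" if "i \<in> A n - A m" for i
    proof -
      have "av (u i) < 1 / real (Suc m)" using that unfolding A_def by auto
      also have "\<dots> \<le> 1 / real (Suc M)" using \<open>M \<le> m\<close> by (simp add: frac_le)
      finally show ?thesis .
    qed
    then have "av (sum u (A n - A m)) < 1 / real (Suc M)" by (intro av_sum_less) auto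
    then show ?thesis using A_mono[OF that(2)] A_finite by (simp add: sum_diff)
  qed
  have "\<forall>e>0. \<exists>M. \<forall>m\<ge>M. \<forall>n\<ge>M. av (sum u (A m) - sum u (A n)) < e"
  proof (intro allI impI)
    fix e :: real assume "e > 0"
    then obtain M where M: "1 / real (Suc M) < e" by (rule nat_approx_posE)
    have "av (sum u (A m) - sum u (A n)) < e" if "M \<le> m" "M \<le> n" for m n
      using diff[of M m n] diff[of M n m] that M av_diff_commute[of "sum u (A m)"]
      by (cases "m \<le> n") auto
    then show "\<exists>M. \<forall>m\<ge>M. \<forall>n\<ge>M. av (sum u (A m) - sum u (A n)) < e" by blast
  qed
  then obtain L where "(\<lambda>k. av (sum u (A k) - L)) \<longlonglongrightarrow> 0"
    using complete[of "\<lambda>k. sum u (A k)"] by blast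
  with that show thesis unfolding A_def by blast
qed

lemma av_null_imp_has_av_sum: assumes "av_null u I" shows "\<exists>L. has_av_sum u I L"
proof -
  define A where "A k = {i\<in>I. 1 / real (Suc k) \<le> av (u i)}" for k
  obtain L where L: "(\<lambda>k. av (sum u (A k) - L)) \<longlonglongrightarrow> 0"
    using av_null_level_sums_converge[OF assms] unfolding A_def by blast
  have "has_av_sum u I L" unfolding has_av_sum_def
  proof (intro allI impI)
    fix e :: real assume e: "e > 0"
    have "eventually (\<lambda>k. av (sum u (A k) - L) < e \<and> 1 / real (Suc k) < e) sequentially"
      using order_tendstoD(2)[OF L e] order_tendstoD(2)[OF LIMSEQ_inverse_real_of_nat e]
      by eventually_elim (simp add: inverse_eq_divide)
    then obtain k where k: "av (sum u (A k) - L) < e" "1 / real (Suc k) < e"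
      using eventually_sequentially by auto
    have "av (sum u F - L) < e" if F: "finite F" "A k \<subseteq> F" "F \<subseteq> I" for F
    proof -
      have "av (u i) < e" if "i \<in> F - A k" for i
        using that F(3) k(2) unfolding A_def by fastforce
      then have "av (sum u (F - A k)) < e" by (intro av_sum_less[OF e]) auto
      moreover have "sum u F - L = sum u (F - A k) + (sum u (A k) - L)"
        using F by (simp add: sum_diff finite_subset)
      ultimately show ?thesis by (metis av_add_less k(1))
    qed
    moreover have "finite (A k)" "A k \<subseteq> I" using assms unfolding av_null_def A_def by auto
    ultimately show "\<exists>F0. finite F0 \<and> F0 \<subseteq> I \<and>
        (\<forall>F. finite F \<longrightarrow> F0 \<subseteq> F \<longrightarrow> F \<subseteq> I \<longrightarrow> av (sum u F - L) < e)" by blast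
  qed
  then show ?thesis ..
qed

lemma has_av_sum_exhaustion:
  assumes "has_av_sum u I L" "\<And>d. finite (A d)" "\<And>d. A d \<subseteq> I" "mono A" "\<And>i. i \<in> I \<Longrightarrow> \<exists>d. i \<in> A d"
  shows "(\<lambda>d. av (sum u (A d) - L)) \<longlonglongrightarrow> 0"
proof (rule LIMSEQ_I)
  fix e :: real assume e: "e > 0"
  obtain F0 where F0: "finite F0" "F0 \<subseteq> I"
      "\<And>F. finite F \<Longrightarrow> F0 \<subseteq> F \<Longrightarrow> F \<subseteq> I \<Longrightarrow> av (sum u F - L) < e"
    by (rule has_av_sumE[OF assms(1) e], blast)
  have "\<exists>d. G \<subseteq> A d" if "finite G" "G \<subseteq> I" for G
    using that
  proof (induction G rule: finite_induct)
    case empty then show ?case by simp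
  next
    case (insert i G)
    then obtain d1 where "G \<subseteq> A d1" by auto
    moreover obtain d2 where "i \<in> A d2" using assms(5)[of i] insert.prems by blast
    ultimately have "insert i G \<subseteq> A (max d1 d2)"
    proof -
      have "A d1 \<subseteq> A (max d1 d2)" "A d2 \<subseteq> A (max d1 d2)"
        using assms(4) unfolding mono_def by auto
      then show ?thesis using \<open>G \<subseteq> A d1\<close> \<open>i \<in> A d2\<close> by auto
    qed
    then show ?case by blast
  qed
  then obtain d where d: "F0 \<subseteq> A d" using F0 by blast
  show "\<exists>no. \<forall>n\<ge>no. norm (av (sum u (A n) - L) - 0) < e"
  proof (intro exI allI impI)
    fix n assume "d \<le> n"
    then have "F0 \<subseteq> A n" using d assms(4) unfolding mono_def by blast
    then show "norm (av (sum u (A n) - L) - 0) < e" using F0(3)[of "A n"] assms(2,3) nonneg by simp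
  qed
qed

lemma av_lim_eqI: assumes "(\<lambda>n. av (s n - L)) \<longlonglongrightarrow> 0" shows "av_lim av s = L"
proof -
  have uniq: "M = L" if M: "(\<lambda>n. av (s n - M)) \<longlonglongrightarrow> 0" for M
  proof -
    have "av (M - L) < e" if e: "e > 0" for e
    proof -
      have "eventually (\<lambda>n. av (s n - L) < e) sequentially"
        using order_tendstoD(2)[OF assms e] by simp
      moreover have "eventually (\<lambda>n. av (s n - M) < e) sequentially"
        using order_tendstoD(2)[OF M e] by simp
      ultimately have "eventually (\<lambda>n. av (s n - L) < e \<and> av (s n - M) < e) sequentially"
        by (rule eventually_conj)
      then obtain N where "\<And>n. n \<ge> N \<Longrightarrow> av (s n - L) < e \<and> av (s n - M) < e"
        unfolding eventually_sequentially by blast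
      then obtain n where a: "av (s n - L) < e" and b: "av (s n - M) < e" by blast
      have "M - L = (s n - L) - (s n - M)" by simp
      then show ?thesis using av_diff_less[OF a b] by simp
    qed
    then show ?thesis using av_less_all_imp_zero[of "M - L"] by simp
  qed
  show ?thesis unfolding av_lim_def
    using assms uniq by (rule the_equality)
qed

lemma has_av_sum_0: "has_av_sum (\<lambda>_. 0) I 0"
  unfolding has_av_sum_def by (auto intro!: exI[of _ "{}"])

lemma has_av_sum_finite: "finite I \<Longrightarrow> has_av_sum u I (sum u I)"
  unfolding has_av_sum_def by (auto intro!: exI[of _ I])

lemma has_av_sum_cong: assumes "\<And>i. i \<in> I \<Longrightarrow> u i = v i" shows "has_av_sum u I L \<longleftrightarrow> has_av_sum v I L"
proof -
  have *: "F \<subseteq> I \<Longrightarrow> sum u F = sum v F" for F using assms by (meson subsetD sum.cong)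
  have eq: "(\<forall>F. finite F \<longrightarrow> F0 \<subseteq> F \<longrightarrow> F \<subseteq> I \<longrightarrow> av (sum u F - L) < e) \<longleftrightarrow>
     (\<forall>F. finite F \<longrightarrow> F0 \<subseteq> F \<longrightarrow> F \<subseteq> I \<longrightarrow> av (sum v F - L) < e)" for F0 e
    using * by auto
  show ?thesis unfolding has_av_sum_def eq ..
qed

lemma has_av_sum_mono_neutral:
  assumes "J \<subseteq> I" "\<And>i. i \<in> I \<Longrightarrow> i \<notin> J \<Longrightarrow> u i = 0"
  shows "has_av_sum u I L \<longleftrightarrow> has_av_sum u J L"
proof
  assume h: "has_av_sum u I L"
  show "has_av_sum u J L" unfolding has_av_sum_def
  proof (intro allI impI)
    fix e :: real assume e: "e > 0"
    obtain F0 where F0: "finite F0" "F0 \<subseteq> I"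
      "\<And>F. finite F \<Longrightarrow> F0 \<subseteq> F \<Longrightarrow> F \<subseteq> I \<Longrightarrow> av (sum u F - L) < e"
      by (rule has_av_sumE[OF h e], blast)
    show "\<exists>F0. finite F0 \<and> F0 \<subseteq> J \<and> (\<forall>F. finite F \<longrightarrow> F0 \<subseteq> F \<longrightarrow> F \<subseteq> J \<longrightarrow> av (sum u F - L) < e)"
    proof (intro exI conjI allI impI)
      show "finite (F0 \<inter> J)" "F0 \<inter> J \<subseteq> J" using F0 by auto
      fix F assume F: "finite F" "F0 \<inter> J \<subseteq> F" "F \<subseteq> J"
      have z: "\<forall>i\<in>F \<union> F0 - F. u i = 0" using F(2) F0(2) assms(2) by blast
      have "sum u (F \<union> F0) = sum u F"
        using F(1) F0(1) z by (intro sum.mono_neutral_right) auto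
      moreover have "av (sum u (F \<union> F0) - L) < e" using F F0 assms(1) by (intro F0(3)) auto
      ultimately show "av (sum u F - L) < e" by simp
    qed
  qed
next
  assume h: "has_av_sum u J L"
  show "has_av_sum u I L" unfolding has_av_sum_def
  proof (intro allI impI)
    fix e :: real assume e: "e > 0"
    obtain F0 where F0: "finite F0" "F0 \<subseteq> J"
      "\<And>F. finite F \<Longrightarrow> F0 \<subseteq> F \<Longrightarrow> F \<subseteq> J \<Longrightarrow> av (sum u F - L) < e"
      by (rule has_av_sumE[OF h e], blast)
    show "\<exists>F0. finite F0 \<and> F0 \<subseteq> I \<and> (\<forall>F. finite F \<longrightarrow> F0 \<subseteq> F \<longrightarrow> F \<subseteq> I \<longrightarrow> av (sum u F - L) < e)"
    proof (intro exI conjI allI impI)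
      show "finite F0" "F0 \<subseteq> I" using F0 assms(1) by auto
      fix F assume F: "finite F" "F0 \<subseteq> F" "F \<subseteq> I"
      have z: "\<forall>i\<in>F - F \<inter> J. u i = 0" using F(3) assms(2) by blast
      have "sum u (F \<inter> J) = sum u F"
        using F(1) z by (intro sum.mono_neutral_left) auto
      then have "sum u F = sum u (F \<inter> J)" by simp
      moreover have "av (sum u (F \<inter> J) - L) < e" using F F0 by (intro F0(3)) auto
      ultimately show "av (sum u F - L) < e" by simp
    qed
  qed
qed

lemma has_av_sum_single: "a \<in> I \<Longrightarrow> (\<And>i. i \<in> I \<Longrightarrow> i \<noteq> a \<Longrightarrow> u i = 0) \<Longrightarrow> has_av_sum u I (u a)"
  using has_av_sum_mono_neutral[of "{a}" I u "u a"] has_av_sum_finite[of "{a}" u] by auto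

lemma has_av_sum_reindex:
  assumes "bij_betw h J I" and sum: "has_av_sum (u \<circ> h) J L"
  shows "has_av_sum u I L"
  unfolding has_av_sum_def
proof (intro allI impI)
  fix e :: real assume e: "e > 0"
  have inj: "inj_on h J" and im: "h ` J = I" using assms(1) by (auto simp: bij_betw_def)
  obtain F0 where F0: "finite F0" "F0 \<subseteq> J"
    "\<And>F. finite F \<Longrightarrow> F0 \<subseteq> F \<Longrightarrow> F \<subseteq> J \<Longrightarrow> av (sum (u \<circ> h) F - L) < e"
    by (rule has_av_sumE[OF sum e], blast)
  have "av (sum u F - L) < e" if F: "finite F" "h ` F0 \<subseteq> F" "F \<subseteq> I" for F
  proof -
    define G where "G = J \<inter> h -` F"
    have "finite G" using finite_vimage_IntI[OF F(1) inj] unfolding G_def by (simp add: Int_commute)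
    moreover have "F0 \<subseteq> G" "G \<subseteq> J" using F F0 unfolding G_def by auto
    ultimately have "av (sum (u \<circ> h) G - L) < e" by (intro F0(3))
    moreover have "h ` G = F" using F(3) im unfolding G_def by auto
    then have "sum (u \<circ> h) G = sum u F"
      using sum.reindex[of h G u] inj_on_subset[OF inj \<open>G \<subseteq> J\<close>] by simp
    ultimately show ?thesis by simp
  qed
  moreover have "finite (h ` F0)" "h ` F0 \<subseteq> I" using F0 im by auto
  ultimately show "\<exists>F0. finite F0 \<and> F0 \<subseteq> I \<and>
      (\<forall>F. finite F \<longrightarrow> F0 \<subseteq> F \<longrightarrow> F \<subseteq> I \<longrightarrow> av (sum u F - L) < e)" by blast
qed

lemma has_av_sum_reindex_bij:
  assumes h: "bij_betw h J I" shows "has_av_sum (u \<circ> h) J L \<longleftrightarrow> has_av_sum u I L"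
proof
  assume "has_av_sum u I L"
  then have "has_av_sum ((u \<circ> h) \<circ> inv_into J h) I L"
    by (rule has_av_sum_cong[THEN iffD1, rotated]) (simp add: bij_betw_inv_into_right[OF h])
  then show "has_av_sum (u \<circ> h) J L" by (rule has_av_sum_reindex[OF bij_betw_inv_into[OF h]])
qed (rule has_av_sum_reindex[OF h])

lemma has_av_sum_add: assumes "has_av_sum u I L" "has_av_sum v I M"
  shows "has_av_sum (\<lambda>i. u i + v i) I (L + M)"
  unfolding has_av_sum_def
proof (intro allI impI)
  fix e :: real assume e: "e > 0"
  obtain F1 where F1: "finite F1" "F1 \<subseteq> I"
    "\<And>F. finite F \<Longrightarrow> F1 \<subseteq> F \<Longrightarrow> F \<subseteq> I \<Longrightarrow> av (sum u F - L) < e"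
    by (rule has_av_sumE[OF assms(1) e], blast)
  obtain F2 where F2: "finite F2" "F2 \<subseteq> I"
    "\<And>F. finite F \<Longrightarrow> F2 \<subseteq> F \<Longrightarrow> F \<subseteq> I \<Longrightarrow> av (sum v F - M) < e"
    by (rule has_av_sumE[OF assms(2) e], blast)
  show "\<exists>F0. finite F0 \<and> F0 \<subseteq> I \<and>
      (\<forall>F. finite F \<longrightarrow> F0 \<subseteq> F \<longrightarrow> F \<subseteq> I \<longrightarrow> av ((\<Sum>i\<in>F. u i + v i) - (L + M)) < e)"
  proof (intro exI conjI allI impI)
    show "finite (F1 \<union> F2)" "F1 \<union> F2 \<subseteq> I" using F1 F2 by auto
    fix F assume F: "finite F" "F1 \<union> F2 \<subseteq> F" "F \<subseteq> I"
    have eq: "(\<Sum>i\<in>F. u i + v i) - (L + M) = (sum u F - L) + (sum v F - M)"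
      by (simp add: sum.distrib algebra_simps)
    have a: "av (sum u F - L) < e" using F F1 by (intro F1(3)) auto
    have b: "av (sum v F - M) < e" using F F2 by (intro F2(3)) auto
    show "av ((\<Sum>i\<in>F. u i + v i) - (L + M)) < e"
      unfolding eq using a b by (rule av_add_less)
  qed
qed

lemma has_av_sum_cmult: assumes "has_av_sum u I L" shows "has_av_sum (\<lambda>i. c * u i) I (c * L)"
proof (cases "c = 0")
  case True
  then show ?thesis unfolding has_av_sum_def by (auto intro!: exI[of _ "{}"])
next
  case False
  then have ac: "av c > 0" using av_pos by simp
  show ?thesis unfolding has_av_sum_def
  proof (intro allI impI)
    fix e :: real assume e: "e > 0"
    obtain F1 where F1: "finite F1" "F1 \<subseteq> I"
      "\<And>F. finite F \<Longrightarrow> F1 \<subseteq> F \<Longrightarrow> F \<subseteq> I \<Longrightarrow> av (sum u F - L) < e / av c"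
      using has_av_sumE[OF assms divide_pos_pos[OF e ac]] by blast
    show "\<exists>F0. finite F0 \<and> F0 \<subseteq> I \<and>
        (\<forall>F. finite F \<longrightarrow> F0 \<subseteq> F \<longrightarrow> F \<subseteq> I \<longrightarrow> av ((\<Sum>i\<in>F. c * u i) - c * L) < e)"
    proof (intro exI conjI allI impI)
      show "finite F1" "F1 \<subseteq> I" using F1 by auto
      fix F assume F: "finite F" "F1 \<subseteq> F" "F \<subseteq> I"
      have "(\<Sum>i\<in>F. c * u i) - c * L = c * (sum u F - L)"
        by (simp add: sum_distrib_left algebra_simps)
      moreover have "av (sum u F - L) * av c < e"
        using F1(3)[OF F] ac by (simp add: pos_less_divide_eq)
      ultimately show "av ((\<Sum>i\<in>F. c * u i) - c * L) < e" by (simp add: av_mult mult.commute)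
    qed
  qed
qed

lemma has_av_sum_uminus: assumes "has_av_sum u I L" shows "has_av_sum (\<lambda>i. - u i) I (- L)"
  using has_av_sum_cmult[OF assms, of "-1"] by simp

lemma has_av_sum_diff: assumes "has_av_sum u I L" "has_av_sum v I M"
  shows "has_av_sum (\<lambda>i. u i - v i) I (L - M)"
  using has_av_sum_add[OF assms(1) has_av_sum_uminus[OF assms(2)]] by simp

lemma has_av_sum_av_le:
  assumes "has_av_sum u I L" "\<And>i. i \<in> I \<Longrightarrow> av (u i) \<le> B" "0 \<le> B"
  shows "av L \<le> B"
proof (rule ccontr)
  assume c: "\<not> av L \<le> B"
  then have e: "av L > 0" using assms(3) by simp
  obtain F0 where F0: "finite F0" "F0 \<subseteq> I"
    "\<And>F. finite F \<Longrightarrow> F0 \<subseteq> F \<Longrightarrow> F \<subseteq> I \<Longrightarrow> av (sum u F - L) < av L"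
    by (rule has_av_sumE[OF assms(1) e], blast)
  have a: "av (sum u F0 - L) < av L" using F0 by auto
  have b: "av (sum u F0) \<le> B" using F0 assms by (intro av_sum_le) auto
  have "L = sum u F0 - (sum u F0 - L)" by simp
  then have "av L \<le> max (av (sum u F0)) (av (sum u F0 - L))"
    using ultrametric[of "sum u F0" "- (sum u F0 - L)"] by (simp add: av_diff_commute[of L])
  then show False using a b c by linarith
qed

lemma has_av_sum_av_less:
  assumes "av_null u I" "has_av_sum u I L" "\<And>i. i \<in> I \<Longrightarrow> av (u i) < B" "0 < B"
  shows "av L < B"
proof -
  define S where "S = {i\<in>I. B / 2 \<le> av (u i)}"
  have fin: "finite S"
    using assms(1)[unfolded av_null_def, rule_format, of "B / 2"] assms(4) unfolding S_def by simp
  define B' where "B' = (if S = {} then B / 2 else max (B / 2) (Max ((\<lambda>i. av (u i)) ` S)))"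
  have "B' < B"
  proof (cases "S = {}")
    case True then show ?thesis unfolding B'_def using assms(4) by simp
  next
    case False
    have "Max ((\<lambda>i. av (u i)) ` S) \<in> (\<lambda>i. av (u i)) ` S" using False fin by (intro Max_in) auto
    then have "Max ((\<lambda>i. av (u i)) ` S) < B" using assms(3) unfolding S_def by auto
    then show ?thesis unfolding B'_def using False assms(4) by simp
  qed
  moreover have "av L \<le> B'"
  proof (rule has_av_sum_av_le[OF assms(2)])
    fix i assume i: "i \<in> I"
    show "av (u i) \<le> B'"
    proof (cases "i \<in> S")
      case True
      then have "av (u i) \<le> Max ((\<lambda>i. av (u i)) ` S)" using fin by (intro Max_ge) auto
      then show ?thesis unfolding B'_def using True by auto
    next
      case False
      then show ?thesis unfolding B'_def S_def using i by auto
    qed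
  next
    show "0 \<le> B'" unfolding B'_def using assms(4) by auto
  qed
  ultimately show ?thesis by simp
qed

lemma has_av_sum_Sigma:
  assumes sum: "has_av_sum u (Sigma I J) L"
    and slices: "\<And>i. i \<in> I \<Longrightarrow> has_av_sum (\<lambda>j. u (i, j)) (J i) (M i)"
  shows "has_av_sum M I L"
  unfolding has_av_sum_def
proof (intro allI impI)
  fix e :: real assume e: "e > 0"
  obtain F0 where F0: "finite F0" "F0 \<subseteq> Sigma I J"
    "\<And>F. finite F \<Longrightarrow> F0 \<subseteq> F \<Longrightarrow> F \<subseteq> Sigma I J \<Longrightarrow> av (sum u F - L) < e"
    by (rule has_av_sumE[OF sum e], blast)
  have "\<forall>i\<in>I. \<exists>H. finite H \<and> H \<subseteq> J i \<and>
      (\<forall>F. finite F \<longrightarrow> H \<subseteq> F \<longrightarrow> F \<subseteq> J i \<longrightarrow> av (sum (\<lambda>j. u (i, j)) F - M i) < e)"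
    using slices e unfolding has_av_sum_def by blast
  then obtain H where H: "\<And>i. i \<in> I \<Longrightarrow> finite (H i)" "\<And>i. i \<in> I \<Longrightarrow> H i \<subseteq> J i"
    "\<And>i F. i \<in> I \<Longrightarrow> finite F \<Longrightarrow> H i \<subseteq> F \<Longrightarrow> F \<subseteq> J i \<Longrightarrow>
       av (sum (\<lambda>j. u (i, j)) F - M i) < e"
    by metis
  have "av (sum M G - L) < e" if G: "finite G" "fst ` F0 \<subseteq> G" "G \<subseteq> I" for G
  proof -
    define H' where "H' i = H i \<union> snd ` (F0 \<inter> {i} \<times> UNIV)" for i
    have H': "finite (H' i)" "H i \<subseteq> H' i" "H' i \<subseteq> J i" if "i \<in> I" for i
      using H(1,2)[OF that] F0(1,2) that unfolding H'_def by auto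
    have "F0 \<subseteq> Sigma G H'" using G(2) unfolding H'_def by force
    moreover have "Sigma G H' \<subseteq> Sigma I J" using G(3) H'(3) by blast
    moreover have "finite (Sigma G H')" using G H'(1) by (intro finite_SigmaI) auto
    ultimately have outer: "av (sum u (Sigma G H') - L) < e" by (intro F0(3))
    have "av (M i - sum (\<lambda>j. u (i, j)) (H' i)) < e" if "i \<in> G" for i
      using H(3)[of i "H' i"] H'[of i] that G(3) by (auto simp: av_diff_commute)
    then have "av (\<Sum>i\<in>G. M i - sum (\<lambda>j. u (i, j)) (H' i)) < e" by (intro av_sum_less[OF e])
    moreover have "sum u (Sigma G H') = (\<Sum>i\<in>G. sum (\<lambda>j. u (i, j)) (H' i))"
      using G H'(1) by (subst sum.Sigma) auto
    then have "sum M G - L = (\<Sum>i\<in>G. M i - sum (\<lambda>j. u (i, j)) (H' i)) + (sum u (Sigma G H') - L)"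
      by (simp add: sum_subtractf)
    ultimately show ?thesis by (metis av_add_less outer)
  qed
  moreover have "finite (fst ` F0)" "fst ` F0 \<subseteq> I" using F0 by auto
  ultimately show "\<exists>G0. finite G0 \<and> G0 \<subseteq> I \<and>
      (\<forall>G. finite G \<longrightarrow> G0 \<subseteq> G \<longrightarrow> G \<subseteq> I \<longrightarrow> av (sum M G - L) < e)" by blast
qed

lemma av_null_Times:
  assumes "av_null u I" "av_null v J" shows "av_null (\<lambda>(i, j). u i * v j) (I \<times> J)"
proof -
  obtain Bu where Bu: "Bu > 0" "\<And>i. i \<in> I \<Longrightarrow> av (u i) \<le> Bu"
    using av_null_bounded[OF assms(1)] by blast
  obtain Bv where Bv: "Bv > 0" "\<And>j. j \<in> J \<Longrightarrow> av (v j) \<le> Bv"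
    using av_null_bounded[OF assms(2)] by blast
  have "finite {x \<in> I \<times> J. e \<le> av (u (fst x) * v (snd x))}" if e: "e > 0" for e
  proof -
    have "{x \<in> I \<times> J. e \<le> av (u (fst x) * v (snd x))} \<subseteq>
          {i\<in>I. e / Bv \<le> av (u i)} \<times> {j\<in>J. e / Bu \<le> av (v j)}"
    proof safe
      fix i j assume ij: "i \<in> I" "j \<in> J" and le: "e \<le> av (u (fst (i, j)) * v (snd (i, j)))"
      then have le': "e \<le> av (u i) * av (v j)" by (simp add: av_mult)
      have "av (u i) * av (v j) \<le> av (u i) * Bv" using Bv ij nonneg by (simp add: mult_left_mono)
      then show "e / Bv \<le> av (u i)" using le' Bv by (simp add: divide_le_eq mult.commute)
      have "av (u i) * av (v j) \<le> Bu * av (v j)" using Bu ij nonneg by (simp add: mult_right_mono)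
      then show "e / Bu \<le> av (v j)" using le' Bu by (simp add: divide_le_eq mult.commute)
    qed
    moreover have "finite ({i\<in>I. e / Bv \<le> av (u i)} \<times> {j\<in>J. e / Bu \<le> av (v j)})"
      using assms e Bu Bv unfolding av_null_def by simp
    ultimately show ?thesis by (rule finite_subset)
  qed
  then show ?thesis unfolding av_null_def by (simp add: case_prod_beta)
qed

lemma has_av_sum_Times:
  assumes "av_null u I" "av_null v J" "has_av_sum u I L" "has_av_sum v J M"
  shows "has_av_sum (\<lambda>(i, j). u i * v j) (I \<times> J) (L * M)"
proof -
  obtain P where P: "has_av_sum (\<lambda>(i, j). u i * v j) (I \<times> J) P"
    using av_null_imp_has_av_sum[OF av_null_Times[OF assms(1,2)]] by blast
  have "has_av_sum (\<lambda>i. u i * M) I P"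
    using has_av_sum_Sigma[OF P, of "\<lambda>i. u i * M"] has_av_sum_cmult[OF assms(4)] by simp
  moreover have "has_av_sum (\<lambda>i. u i * M) I (L * M)"
    using has_av_sum_cmult[OF assms(3), of M] by (simp add: mult.commute)
  ultimately have "P = L * M" by (rule has_av_sum_unique)
  then show ?thesis using P by simp
qed

lemma has_av_sum_iterated:
  assumes w: "av_null w (I \<times> J)"
    and rows: "\<And>i. i \<in> I \<Longrightarrow> has_av_sum (\<lambda>j. w (i, j)) J (A i)"
    and cols: "\<And>j. j \<in> J \<Longrightarrow> has_av_sum (\<lambda>i. w (i, j)) I (B j)"
  obtains W where "has_av_sum A I W" "has_av_sum B J W"
proof -
  obtain W where W: "has_av_sum w (I \<times> J) W" using av_null_imp_has_av_sum[OF w] by blast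
  have "bij_betw prod.swap (J \<times> I) (I \<times> J)" by (simp add: bij_betw_def product_swap)
  then have "has_av_sum (w \<circ> prod.swap) (J \<times> I) W" using has_av_sum_reindex_bij W by blast
  then have "has_av_sum B J W" by (rule has_av_sum_Sigma) (simp add: cols)
  with has_av_sum_Sigma[OF W rows] show thesis by (rule that)
qed

section \<open>Tate algebras\<close>

lemma av_monomial_le_1: "(\<And>i. i < m \<Longrightarrow> av (x i) \<le> 1) \<Longrightarrow> av (monomial m x \<alpha>) \<le> 1"
  unfolding monomial_def by (rule av_prod_le_1) (auto intro: av_power_le_1)

lemma has_av_sum_av_lim_deg_le: assumes "av_null g (multi m)"
  shows "has_av_sum g (multi m) (av_lim av (\<lambda>d. \<Sum>\<alpha>\<in>deg_le m d. g \<alpha>))"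
proof -
  obtain L where L: "has_av_sum g (multi m) L" using av_null_imp_has_av_sum[OF assms] by blast
  have "(\<lambda>d. av (sum g (deg_le m d) - L)) \<longlonglongrightarrow> 0"
    using L finite_deg_le deg_le_subset_multi mono_deg_le deg_le_exhaust
    by (rule has_av_sum_exhaustion)
  then have "av_lim av (\<lambda>d. sum g (deg_le m d)) = L" by (rule av_lim_eqI)
  then show ?thesis using L by simp
qed

lemma tate_av_null: "tate av m f \<Longrightarrow> av_null f I"
  unfolding tate_def av_null_def by (metis (no_types, lifting) finite_subset mem_Collect_eq subsetI)

lemma tate_av_le_1: "tate av m f \<Longrightarrow> av (f \<alpha>) \<le> 1"
  unfolding tate_def by blast

lemma tate_support: "tate av m f \<Longrightarrow> \<alpha> \<notin> multi m \<Longrightarrow> f \<alpha> = 0"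
  unfolding tate_def by blast

lemma tateI:
  assumes "\<And>\<alpha>. \<alpha> \<notin> multi m \<Longrightarrow> f \<alpha> = 0" "\<And>\<alpha>. av (f \<alpha>) \<le> 1"
    "\<And>e. e > 0 \<Longrightarrow> finite {\<alpha>. e \<le> av (f \<alpha>)}"
  shows "tate av m f"
  unfolding tate_def using assms by blast

lemma ser_eval_has_av_sum:
  assumes "tate av m f" "\<And>i. i < m \<Longrightarrow> av (x i) \<le> 1"
  shows "has_av_sum (\<lambda>\<alpha>. f \<alpha> * monomial m x \<alpha>) (multi m) (ser_eval av m f x)"
proof -
  have "av_null (\<lambda>\<alpha>. f \<alpha> * monomial m x \<alpha>) (multi m)"
  proof (rule av_null_mono[OF tate_av_null[OF assms(1)]])
    fix \<alpha> show "av (f \<alpha> * monomial m x \<alpha>) \<le> av (f \<alpha>)"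
      using av_monomial_le_1[OF assms(2)] nonneg by (simp add: av_mult mult_left_le)
  qed
  then show ?thesis unfolding ser_eval_eq_av_lim by (rule has_av_sum_av_lim_deg_le)
qed

lemma ser_eval_eqI:
  assumes "tate av m f" "\<And>i. i < m \<Longrightarrow> av (x i) \<le> 1"
    "has_av_sum (\<lambda>\<alpha>. f \<alpha> * monomial m x \<alpha>) (multi m) L"
  shows "ser_eval av m f x = L"
  using has_av_sum_unique[OF ser_eval_has_av_sum[OF assms(1,2)] assms(3)] .

lemma av_ser_eval_le_1:
  assumes "tate av m f" "\<And>i. i < m \<Longrightarrow> av (x i) \<le> 1"
  shows "av (ser_eval av m f x) \<le> 1"
proof -
  have "av (f \<alpha> * monomial m x \<alpha>) \<le> 1" for \<alpha>
    using av_monomial_le_1[OF assms(2)] tate_av_le_1[OF assms(1)] by (simp add: av_mult_le_1)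
  then show ?thesis using has_av_sum_av_le[OF ser_eval_has_av_sum[OF assms], where B=1] by simp
qed

lemma tate_const: assumes "av c \<le> 1" shows "tate av n (ser_const c)"
proof (rule tateI)
  fix \<alpha> :: "nat \<Rightarrow> nat" assume "\<alpha> \<notin> multi n"
  then show "ser_const c \<alpha> = 0" unfolding ser_const_def using zero_in_multi by auto
next
  fix \<alpha> :: "nat \<Rightarrow> nat" show "av (ser_const c \<alpha>) \<le> 1" unfolding ser_const_def using assms by simp
next
  fix e :: real assume "e > 0"
  then have "{\<alpha>. e \<le> av (ser_const c \<alpha>)} \<subseteq> {\<lambda>_. 0}" unfolding ser_const_def by auto
  then show "finite {\<alpha>. e \<le> av (ser_const c \<alpha>)}" by (rule finite_subset) simp
qed

lemma tate_one: "tate av n ser_one"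
  by (simp add: ser_one_eq_const tate_const)

lemma tate_var: assumes "i < n" shows "tate av n (ser_var i)"
proof (rule tateI)
  fix \<alpha> :: "nat \<Rightarrow> nat" assume "\<alpha> \<notin> multi n"
  moreover have "(\<lambda>j. if j = i then 1 else 0) \<in> multi n" using assms unfolding multi_def by auto
  ultimately show "ser_var i \<alpha> = 0" unfolding ser_var_def by auto
next
  fix \<alpha> :: "nat \<Rightarrow> nat" show "av (ser_var i \<alpha>) \<le> 1" unfolding ser_var_def by simp
next
  fix e :: real assume "e > 0"
  then have "{\<alpha>. e \<le> av (ser_var i \<alpha>)} \<subseteq> {\<lambda>j. if j = i then 1 else 0}" unfolding ser_var_def by auto
  then show "finite {\<alpha>. e \<le> av (ser_var i \<alpha>)}" by (rule finite_subset) simp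
qed

lemma tate_mult: assumes u: "tate av n u" and v: "tate av n v" shows "tate av n (ser_mult u v)"
proof (rule tateI)
  fix \<beta> :: "nat \<Rightarrow> nat" assume b: "\<beta> \<notin> multi n"
  then obtain i where i: "i \<ge> n" "\<beta> i \<noteq> 0" unfolding multi_def by auto
  have "u \<alpha> * v (\<lambda>i. \<beta> i - \<alpha> i) = 0" if "\<alpha> \<in> {\<alpha>. \<forall>i. \<alpha> i \<le> \<beta> i}" for \<alpha>
  proof (cases "\<alpha> i = 0")
    case True
    then have "(\<lambda>i. \<beta> i - \<alpha> i) \<notin> multi n" using i unfolding multi_def by auto
    then show ?thesis using tate_support[OF v] by simp
  next
    case False
    then have "\<alpha> \<notin> multi n" using i unfolding multi_def by auto
    then show ?thesis using tate_support[OF u] by simp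
  qed
  then show "ser_mult u v \<beta> = 0" unfolding ser_mult_def by (intro sum.neutral) blast
next
  fix \<beta> :: "nat \<Rightarrow> nat"
  show "av (ser_mult u v \<beta>) \<le> 1" unfolding ser_mult_def
    by (rule av_sum_le) (auto intro!: av_mult_le_1 tate_av_le_1[OF u] tate_av_le_1[OF v])
next
  fix e :: real assume e: "e > 0"
  define A where "A = {\<alpha>. e \<le> av (u \<alpha>)} \<times> {\<gamma>. e \<le> av (v \<gamma>)}"
  have "\<beta> \<in> (\<lambda>(\<alpha>, \<gamma>) i. \<alpha> i + \<gamma> i) ` A" if "e \<le> av (ser_mult u v \<beta>)" for \<beta>
  proof -
    have "\<exists>\<alpha>\<in>{\<alpha>. \<forall>i. \<alpha> i \<le> \<beta> i}. e \<le> av (u \<alpha> * v (\<lambda>i. \<beta> i - \<alpha> i))"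
    proof (rule ccontr)
      assume "\<not> ?thesis"
      then have "av (ser_mult u v \<beta>) < e" unfolding ser_mult_def by (intro av_sum_less[OF e]) auto
      then show False using that by simp
    qed
    then obtain \<alpha> where \<alpha>: "\<forall>i. \<alpha> i \<le> \<beta> i" and le: "e \<le> av (u \<alpha> * v (\<lambda>i. \<beta> i - \<alpha> i))"
      by blast
    have "av (u \<alpha> * v (\<lambda>i. \<beta> i - \<alpha> i)) \<le> av (u \<alpha>)"
      by (rule av_mult_le_right[OF order_refl tate_av_le_1[OF v]])
    moreover have "av (u \<alpha> * v (\<lambda>i. \<beta> i - \<alpha> i)) \<le> av (v (\<lambda>i. \<beta> i - \<alpha> i))"
      by (rule av_mult_le_left[OF tate_av_le_1[OF u] order_refl])
    moreover have "\<beta> = (\<lambda>i. \<alpha> i + (\<beta> i - \<alpha> i))" using \<alpha> by (auto simp: fun_eq_iff)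
    ultimately show ?thesis
      using le unfolding A_def by (intro image_eqI[where x="(\<alpha>, \<lambda>i. \<beta> i - \<alpha> i)"]) auto
  qed
  then have "{\<beta>. e \<le> av (ser_mult u v \<beta>)} \<subseteq> (\<lambda>(\<alpha>, \<gamma>) i. \<alpha> i + \<gamma> i) ` A" by blast
  moreover have "finite A" using u v e unfolding tate_def A_def by blast
  ultimately show "finite {\<beta>. e \<le> av (ser_mult u v \<beta>)}" by (rule finite_subset[OF _ finite_imageI])
qed

lemma tate_pow: "tate av n u \<Longrightarrow> tate av n (ser_pow u k)"
  by (induction k) (simp_all add: ser_pow_0 ser_pow_Suc tate_one tate_mult)

lemma tate_prodp: "(\<And>i. i < j \<Longrightarrow> tate av n (h i)) \<Longrightarrow> tate av n (ser_prodp h \<alpha> j)"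
  by (induction j) (simp_all add: tate_one tate_mult tate_pow)

lemma ser_eval_const: assumes "\<And>i. i < n \<Longrightarrow> av (x i) \<le> 1" "av c \<le> 1"
  shows "ser_eval av n (ser_const c) x = c"
proof (rule ser_eval_eqI[OF tate_const[OF assms(2)] assms(1)])
  have "has_av_sum (\<lambda>\<alpha>. ser_const c \<alpha> * monomial n x \<alpha>) (multi n)
      (ser_const c (\<lambda>_. 0) * monomial n x (\<lambda>_. 0))"
    by (rule has_av_sum_single[OF zero_in_multi]) (simp add: ser_const_def)
  then show "has_av_sum (\<lambda>\<alpha>. ser_const c \<alpha> * monomial n x \<alpha>) (multi n) c"
    by (simp add: ser_const_def monomial_zero)
qed

lemma ser_eval_one: "(\<And>i. i < n \<Longrightarrow> av (x i) \<le> 1) \<Longrightarrow> ser_eval av n ser_one x = 1"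
  by (simp add: ser_one_eq_const ser_eval_const)

lemma ser_eval_var: assumes "\<And>i. i < n \<Longrightarrow> av (x i) \<le> 1" "i < n"
  shows "ser_eval av n (ser_var i) x = x i"
proof (rule ser_eval_eqI[OF tate_var[OF assms(2)] assms(1)])
  define d where "d = (\<lambda>j::nat. if j = i then 1 else (0::nat))"
  have dm: "d \<in> multi n" using assms(2) unfolding d_def multi_def by auto
  have "has_av_sum (\<lambda>\<alpha>. ser_var i \<alpha> * monomial n x \<alpha>) (multi n) (ser_var i d * monomial n x d)"
    by (rule has_av_sum_single[OF dm]) (simp add: ser_var_def d_def)
  moreover have "monomial n x d = x i"
  proof -
    have "monomial n x d = (\<Prod>j<n. if j = i then x j else 1)"
      unfolding monomial_def d_def by (rule prod.cong) auto
    also have "\<dots> = x i" using assms(2) by (simp add: prod.delta)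
    finally show ?thesis .
  qed
  ultimately show "has_av_sum (\<lambda>\<alpha>. ser_var i \<alpha> * monomial n x \<alpha>) (multi n) (x i)"
    by (simp add: ser_var_def d_def)
qed

lemma ser_eval_mult:
  assumes u: "tate av n u" and v: "tate av n v" and x: "\<And>i. i < n \<Longrightarrow> av (x i) \<le> 1"
  shows "ser_eval av n (ser_mult u v) x = ser_eval av n u x * ser_eval av n v x"
proof -
  define U where "U = ser_eval av n u x"
  define V where "V = ser_eval av n v x"
  define w where "w = (\<lambda>(\<beta>, \<alpha>). u \<alpha> * v (\<lambda>i. \<beta> i - \<alpha> i) * monomial n x \<beta>)"
  have nu: "av_null (\<lambda>\<alpha>. u \<alpha> * monomial n x \<alpha>) (multi n)"
    by (rule av_null_mono[OF tate_av_null[OF u]])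
      (simp add: av_mult mult_left_le av_monomial_le_1[OF x] nonneg)
  have nv: "av_null (\<lambda>\<alpha>. v \<alpha> * monomial n x \<alpha>) (multi n)"
    by (rule av_null_mono[OF tate_av_null[OF v]])
      (simp add: av_mult mult_left_le av_monomial_le_1[OF x] nonneg)
  have "has_av_sum (\<lambda>(\<alpha>, \<gamma>). (u \<alpha> * monomial n x \<alpha>) * (v \<gamma> * monomial n x \<gamma>))
      (multi n \<times> multi n) (U * V)"
    using has_av_sum_Times[OF nu nv ser_eval_has_av_sum[OF u x] ser_eval_has_av_sum[OF v x]]
      unfolding U_def V_def .
  moreover have "w \<circ> (\<lambda>(\<alpha>, \<gamma>). (\<lambda>i. \<alpha> i + \<gamma> i, \<alpha>))
      = (\<lambda>(\<alpha>, \<gamma>). (u \<alpha> * monomial n x \<alpha>) * (v \<gamma> * monomial n x \<gamma>))"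
    unfolding w_def by (rule ext) (auto simp: monomial_add split: prod.splits)
  ultimately have "has_av_sum (w \<circ> (\<lambda>(\<alpha>, \<gamma>). (\<lambda>i. \<alpha> i + \<gamma> i, \<alpha>))) (multi n \<times> multi n) (U * V)"
    by simp
  then have hw: "has_av_sum w (Sigma (multi n) (\<lambda>\<beta>. {\<alpha>. \<forall>i. \<alpha> i \<le> \<beta> i})) (U * V)"
    using has_av_sum_reindex_bij[OF bij_betw_add_multi] by blast
  have hsM: "has_av_sum (\<lambda>\<beta>. ser_mult u v \<beta> * monomial n x \<beta>) (multi n) (U * V)"
  proof (rule has_av_sum_Sigma[OF hw])
    fix \<beta> assume b: "\<beta> \<in> multi n"
    have "has_av_sum (\<lambda>\<alpha>. w (\<beta>, \<alpha>)) {\<alpha>. \<forall>i. \<alpha> i \<le> \<beta> i} (sum (\<lambda>\<alpha>. w (\<beta>, \<alpha>)) {\<alpha>. \<forall>i. \<alpha> i \<le> \<beta> i})"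
      by (rule has_av_sum_finite[OF finite_below[OF b]])
    moreover have "sum (\<lambda>\<alpha>. w (\<beta>, \<alpha>)) {\<alpha>. \<forall>i. \<alpha> i \<le> \<beta> i} = ser_mult u v \<beta> * monomial n x \<beta>"
      unfolding w_def ser_mult_def by (simp add: sum_distrib_right)
    ultimately show "has_av_sum (\<lambda>\<alpha>. w (\<beta>, \<alpha>)) {\<alpha>. \<forall>i. \<alpha> i \<le> \<beta> i}
        (ser_mult u v \<beta> * monomial n x \<beta>)" by simp
  qed
  show ?thesis unfolding U_def[symmetric] V_def[symmetric]
    by (rule ser_eval_eqI[of n "ser_mult u v" x, OF tate_mult[OF u v] x hsM])
qed

lemma ser_eval_pow:
  assumes u: "tate av n u" and x: "\<And>i. i < n \<Longrightarrow> av (x i) \<le> 1"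
  shows "ser_eval av n (ser_pow u k) x = ser_eval av n u x ^ k"
  by (induction k)
    (simp_all add: ser_pow_0 ser_pow_Suc ser_eval_one[OF x] ser_eval_mult[OF u tate_pow[OF u] x])

lemma ser_eval_prodp:
  assumes h: "\<And>i. i < j \<Longrightarrow> tate av n (h i)" and x: "\<And>i. i < n \<Longrightarrow> av (x i) \<le> 1"
  shows "ser_eval av n (ser_prodp h \<alpha> j) x = (\<Prod>i<j. ser_eval av n (h i) x ^ \<alpha> i)"
  using h
proof (induction j)
  case 0 then show ?case by (simp add: ser_eval_one[OF x])
next
  case (Suc j)
  have hj: "tate av n (h j)" using Suc.prems by simp
  have hp: "tate av n (ser_prodp h \<alpha> j)" using Suc.prems by (intro tate_prodp) simp
  show ?case using Suc
    by (simp add: ser_eval_mult[OF hp tate_pow[OF hj] x] ser_eval_pow[OF hj x])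
qed

lemma ser_subst_has_av_sum:
  assumes f: "tate av m f" and h: "\<And>j. j < m \<Longrightarrow> tate av n (h j)"
  shows "has_av_sum (\<lambda>\<alpha>. f \<alpha> * ser_prodp h \<alpha> m \<beta>) (multi m) (ser_subst av m f h \<beta>)"
proof -
  have "av_null (\<lambda>\<alpha>. f \<alpha> * ser_prodp h \<alpha> m \<beta>) (multi m)"
  proof (rule av_null_mono[OF tate_av_null[OF f]])
    fix \<alpha> show "av (f \<alpha> * ser_prodp h \<alpha> m \<beta>) \<le> av (f \<alpha>)"
      using tate_av_le_1[OF tate_prodp[OF h]] nonneg by (simp add: av_mult mult_left_le)
  qed
  then show ?thesis unfolding ser_subst_eq_av_lim by (rule has_av_sum_av_lim_deg_le)
qed

lemma av_null_subst_terms: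
  assumes f: "tate av m f" and h: "\<And>j. j < m \<Longrightarrow> tate av n (h j)"
  shows "av_null (\<lambda>(\<beta>, \<alpha>). f \<alpha> * ser_prodp h \<alpha> m \<beta>) (UNIV \<times> multi m)"
  unfolding av_null_def
proof (intro allI impI)
  fix e :: real assume e: "e > 0"
  define A where "A = {\<alpha>. e \<le> av (f \<alpha>)}"
  define B where "B \<alpha> = {\<beta>. e \<le> av (ser_prodp h \<alpha> m \<beta>)}" for \<alpha>
  have "finite A" using f e unfolding tate_def A_def by blast
  moreover have "finite (B \<alpha>)" for \<alpha>
    using tate_prodp[of m n h \<alpha>, OF h] e unfolding tate_def B_def by blast
  ultimately have fin: "finite (prod.swap ` Sigma A B)" by (intro finite_imageI finite_SigmaI)
  have mem: "(\<beta>, \<alpha>) \<in> prod.swap ` Sigma A B" if "e \<le> av (f \<alpha> * ser_prodp h \<alpha> m \<beta>)" for \<alpha> \<beta>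
  proof -
    have "av (f \<alpha> * ser_prodp h \<alpha> m \<beta>) \<le> av (f \<alpha>)"
      by (rule av_mult_le_right[OF order_refl tate_av_le_1[OF tate_prodp[OF h]]])
    moreover have "av (f \<alpha> * ser_prodp h \<alpha> m \<beta>) \<le> av (ser_prodp h \<alpha> m \<beta>)"
      by (rule av_mult_le_left[OF tate_av_le_1[OF f] order_refl])
    ultimately show ?thesis using that unfolding A_def B_def by force
  qed
  then have "{p \<in> UNIV \<times> multi m. e \<le> av ((\<lambda>(\<beta>, \<alpha>). f \<alpha> * ser_prodp h \<alpha> m \<beta>) p)}
      \<subseteq> prod.swap ` Sigma A B" by force
  then show "finite {p \<in> UNIV \<times> multi m. e \<le> av ((\<lambda>(\<beta>, \<alpha>). f \<alpha> * ser_prodp h \<alpha> m \<beta>) p)}"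
    using fin by (rule finite_subset)
qed

lemma tate_subst:
  assumes f: "tate av m f" and h: "\<And>j. j < m \<Longrightarrow> tate av n (h j)"
  shows "tate av n (ser_subst av m f h)"
proof (rule tateI)
  fix \<beta> :: "nat \<Rightarrow> nat" assume b: "\<beta> \<notin> multi n"
  have hs0: "has_av_sum (\<lambda>\<alpha>. f \<alpha> * ser_prodp h \<alpha> m \<beta>) (multi m) 0"
    using has_av_sum_0 has_av_sum_cong tate_support[OF tate_prodp[OF h] b] by simp
  show "ser_subst av m f h \<beta> = 0"
    by (rule has_av_sum_unique[OF ser_subst_has_av_sum[of m f n h \<beta>, OF f h] hs0])
next
  fix \<beta> :: "nat \<Rightarrow> nat"
  have "av (f \<alpha> * ser_prodp h \<alpha> m \<beta>) \<le> 1" for \<alpha>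
    using tate_av_le_1[OF tate_prodp[OF h]] tate_av_le_1[OF f] by (simp add: av_mult_le_1)
  then show "av (ser_subst av m f h \<beta>) \<le> 1"
    using has_av_sum_av_le[OF ser_subst_has_av_sum[OF f h], where B=1] by simp
next
  fix e :: real assume e: "e > 0"
  define t where "t = (\<lambda>(\<beta>, \<alpha>). f \<alpha> * ser_prodp h \<alpha> m \<beta>)"
  have "\<beta> \<in> fst ` {p \<in> UNIV \<times> multi m. e \<le> av (t p)}" if "e \<le> av (ser_subst av m f h \<beta>)" for \<beta>
  proof (rule ccontr)
    assume "\<beta> \<notin> fst ` {p \<in> UNIV \<times> multi m. e \<le> av (t p)}"
    then have "av (f \<alpha> * ser_prodp h \<alpha> m \<beta>) < e" if "\<alpha> \<in> multi m" for \<alpha>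
      using that unfolding t_def by (force simp: image_iff)
    moreover have "av_null (\<lambda>\<alpha>. f \<alpha> * ser_prodp h \<alpha> m \<beta>) (multi m)"
      by (rule av_null_mono[OF tate_av_null[OF f]] av_mult_le_right[OF order_refl])+
        (rule tate_av_le_1[OF tate_prodp[OF h]])
    ultimately have "av (ser_subst av m f h \<beta>) < e"
      using has_av_sum_av_less[OF _ ser_subst_has_av_sum[of m f n h \<beta>, OF f h] _ e] by blast
    then show False using that by simp
  qed
  then have "{\<beta>. e \<le> av (ser_subst av m f h \<beta>)} \<subseteq> fst ` {p \<in> UNIV \<times> multi m. e \<le> av (t p)}" by blast
  moreover have "finite {p \<in> UNIV \<times> multi m. e \<le> av (t p)}"
    using av_null_subst_terms[of m f n h, OF f h] e unfolding av_null_def t_def by blast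
  ultimately show "finite {\<beta>. e \<le> av (ser_subst av m f h \<beta>)}" by (meson finite_imageI finite_subset)
qed

text \<open>Both sides are iterated sums of the null family f \<alpha> * P \<alpha> \<beta> * x^\<beta>, where
  P \<alpha> = h^\<alpha> is a power of the substituted series: summing over \<alpha> first gives the
  left-hand side, summing over \<beta> first the right-hand side.\<close>

lemma ser_eval_subst:
  assumes f: "tate av m f" and h: "\<And>j. j < m \<Longrightarrow> tate av n (h j)"
    and x: "\<And>i. i < n \<Longrightarrow> av (x i) \<le> 1"
  shows "ser_eval av n (ser_subst av m f h) x = ser_eval av m f (\<lambda>j. ser_eval av n (h j) x)"
proof -
  define P where "P \<alpha> = ser_prodp h \<alpha> m" for \<alpha>
  define S where "S = ser_subst av m f h"
  define y where "y = (\<lambda>j. ser_eval av n (h j) x)"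
  have tP: "tate av n (P \<alpha>)" for \<alpha> unfolding P_def by (rule tate_prodp[of m n h \<alpha>, OF h])
  have y1: "av (y j) \<le> 1" if "j < m" for j unfolding y_def
    by (rule av_ser_eval_le_1[of n "h j" x, OF h[OF that] x])
  define w where "w = (\<lambda>(\<beta>, \<alpha>). f \<alpha> * P \<alpha> \<beta> * monomial n x \<beta>)"
  have "av_null (\<lambda>(\<beta>, \<alpha>). f \<alpha> * P \<alpha> \<beta>) (multi n \<times> multi m)"
    unfolding P_def by (rule av_null_subset[OF av_null_subst_terms[of m f n h, OF f h]]) auto
  then have w: "av_null w (multi n \<times> multi m)"
  proof (rule av_null_mono)
    fix p :: "(nat \<Rightarrow> nat) \<times> (nat \<Rightarrow> nat)"
    obtain \<beta> \<alpha> where "p = (\<beta>, \<alpha>)" by (cases p)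
    then show "av (w p) \<le> av ((\<lambda>(\<beta>, \<alpha>). f \<alpha> * P \<alpha> \<beta>) p)"
      using av_mult_le_right[OF order_refl av_monomial_le_1[of n x, OF x]] by (simp add: w_def)
  qed
  have rows: "has_av_sum (\<lambda>\<alpha>. w (\<beta>, \<alpha>)) (multi m) (S \<beta> * monomial n x \<beta>)" for \<beta>
  proof -
    have "has_av_sum (\<lambda>\<alpha>. monomial n x \<beta> * (f \<alpha> * P \<alpha> \<beta>)) (multi m) (monomial n x \<beta> * S \<beta>)"
      unfolding P_def S_def
      by (rule has_av_sum_cmult[OF ser_subst_has_av_sum[of m f n h \<beta>, OF f h]])
    then show ?thesis unfolding w_def by (simp add: ac_simps)
  qed
  have cols: "has_av_sum (\<lambda>\<beta>. w (\<beta>, \<alpha>)) (multi n) (f \<alpha> * monomial m y \<alpha>)" for \<alpha>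
  proof -
    have "has_av_sum (\<lambda>\<beta>. f \<alpha> * (P \<alpha> \<beta> * monomial n x \<beta>)) (multi n) (f \<alpha> * ser_eval av n (P \<alpha>) x)"
      by (rule has_av_sum_cmult[OF ser_eval_has_av_sum[of n "P \<alpha>" x, OF tP x]])
    moreover have "ser_eval av n (P \<alpha>) x = monomial m y \<alpha>"
      unfolding P_def y_def monomial_def by (rule ser_eval_prodp[of m n h x \<alpha>, OF h x])
    ultimately show ?thesis unfolding w_def by (simp add: ac_simps)
  qed
  obtain W where "has_av_sum (\<lambda>\<beta>. S \<beta> * monomial n x \<beta>) (multi n) W"
    and "has_av_sum (\<lambda>\<alpha>. f \<alpha> * monomial m y \<alpha>) (multi m) W"
    using has_av_sum_iterated[OF w rows cols] by blast
  moreover have "tate av n S" unfolding S_def by (rule tate_subst[of m f n h, OF f h])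
  ultimately have "ser_eval av n S x = W" and "ser_eval av m f y = W"
    using ser_eval_eqI[of n S x, OF _ x] ser_eval_eqI[of m f y, OF f y1] by blast+
  then show ?thesis unfolding S_def y_def by simp
qed

lemma av_ser_eval_diff_le:
  assumes f: "tate av m f" and x1: "\<And>i. i < m \<Longrightarrow> av (x i) \<le> 1" and y1: "\<And>i. i < m \<Longrightarrow> av (y i) \<le> 1"
    and xy: "\<And>i. i < m \<Longrightarrow> av (x i - y i) \<le> d" and d: "0 \<le> d"
  shows "av (ser_eval av m f x - ser_eval av m f y) \<le> d"
proof -
  have H: "has_av_sum (\<lambda>\<alpha>. f \<alpha> * monomial m x \<alpha> - f \<alpha> * monomial m y \<alpha>) (multi m)
      (ser_eval av m f x - ser_eval av m f y)"
    using ser_eval_has_av_sum[of m f x, OF f x1] ser_eval_has_av_sum[of m f y, OF f y1]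
    by (rule has_av_sum_diff)
  have "av (f \<alpha> * monomial m x \<alpha> - f \<alpha> * monomial m y \<alpha>) \<le> d" for \<alpha>
  proof -
    have md: "av (monomial m x \<alpha> - monomial m y \<alpha>) \<le> d" unfolding monomial_def
      by (rule av_prod_diff_le) (auto simp: d intro!: av_power_le_1 av_power_diff_le x1 y1 xy)
    have "f \<alpha> * monomial m x \<alpha> - f \<alpha> * monomial m y \<alpha> = f \<alpha> * (monomial m x \<alpha> - monomial m y \<alpha>)"
      by (simp add: algebra_simps)
    then show ?thesis using av_mult_le_left[OF tate_av_le_1[OF f, of \<alpha>] md] by simp
  qed
  then show ?thesis using has_av_sum_av_le[OF H, where B=d] d by simp
qed

lemma av_ser_eval_diff_le_coeffs:
  assumes f: "tate av m f" and g: "tate av m g" and x: "\<And>i. i < m \<Longrightarrow> av (x i) \<le> 1"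
    and fg: "\<And>\<alpha>. \<alpha> \<in> multi m \<Longrightarrow> av (f \<alpha> - g \<alpha>) \<le> d" and d: "0 \<le> d"
  shows "av (ser_eval av m f x - ser_eval av m g x) \<le> d"
proof -
  have "has_av_sum (\<lambda>\<alpha>. f \<alpha> * monomial m x \<alpha> - g \<alpha> * monomial m x \<alpha>) (multi m)
          (ser_eval av m f x - ser_eval av m g x)"
    by (rule has_av_sum_diff[OF ser_eval_has_av_sum[OF f x] ser_eval_has_av_sum[OF g x]])
  moreover have "av (f \<alpha> * monomial m x \<alpha> - g \<alpha> * monomial m x \<alpha>) \<le> d" if "\<alpha> \<in> multi m" for \<alpha>
    using av_mult_le_right[OF fg[OF that] av_monomial_le_1[OF x]] by (simp add: left_diff_distrib)
  ultimately show ?thesis using has_av_sum_av_le d by blast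
qed

section \<open>The orbit and its interpolation\<close>

lemma ser_iter_eval:
  assumes F: "\<And>i. i < N \<Longrightarrow> tate av N (F i)" and a: "a \<in> disk av N"
  shows "(Fmap av N F ^^ n) a \<in> disk av N \<and> (\<forall>i<N. tate av N (ser_iter av N F n i) \<and>
            ser_eval av N (ser_iter av N F n i) a = (Fmap av N F ^^ n) a i)"
proof (induction n)
  case 0
  have a1: "\<And>i. i < N \<Longrightarrow> av (a i) \<le> 1" using a by (rule disk_av_le_1)
  show ?case using a by (simp add: tate_var ser_eval_var[OF a1])
next
  case (Suc n)
  define D where "D = (Fmap av N F ^^ n) a"
  have D: "D \<in> disk av N" using Suc D_def by simp
  have D1: "\<And>i. i < N \<Longrightarrow> av (D i) \<le> 1" using D by (rule disk_av_le_1)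
  have a1: "\<And>i. i < N \<Longrightarrow> av (a i) \<le> 1" using a by (rule disk_av_le_1)
  have tI: "\<And>j. j < N \<Longrightarrow> tate av N (ser_iter av N F n j)" using Suc by simp
  have eI: "\<And>j. j < N \<Longrightarrow> ser_eval av N (ser_iter av N F n j) a = D j" using Suc D_def by simp
  have step: "(Fmap av N F ^^ Suc n) a = Fmap av N F D" unfolding D_def by simp
  have disk: "Fmap av N F D \<in> disk av N"
    unfolding disk_def Fmap_def using av_ser_eval_le_1[OF F D1] by auto
  have "tate av N (ser_iter av N F (Suc n) i) \<and>
      ser_eval av N (ser_iter av N F (Suc n) i) a = Fmap av N F D i"
    if i: "i < N" for i
  proof
    show "tate av N (ser_iter av N F (Suc n) i)"
      by (simp add: tate_subst[of N "F i" N "ser_iter av N F n", OF F[OF i] tI])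
    have "ser_eval av N (ser_iter av N F (Suc n) i) a =
      ser_eval av N (F i) (\<lambda>j. ser_eval av N (ser_iter av N F n j) a)"
      by (simp add: ser_eval_subst[of N "F i" N "ser_iter av N F n" a, OF F[OF i] tI a1])
    also have "\<dots> = ser_eval av N (F i) D" by (rule ser_eval_cong) (simp add: eI)
    also have "\<dots> = Fmap av N F D i" unfolding Fmap_def using i by simp
    finally show "ser_eval av N (ser_iter av N F (Suc n) i) a = Fmap av N F D i" .
  qed
  then show ?case using disk step by simp
qed

lemma Gpt_in_disk:
  assumes g: "\<And>i. i < N \<Longrightarrow> tate av (Suc N) (g i)" and a: "a \<in> disk av N" and t: "av t \<le> 1"
  shows "Gpt av N g a t \<in> disk av N"
proof -
  have "av (ser_eval av (Suc N) (g i) (\<lambda>j. if j < N then a j else if j = N then t else 0)) \<le> 1"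
    if "i < N" for i
    using disk_av_le_1[OF a] t by (intro av_ser_eval_le_1[OF g[OF that]]) auto
  then show ?thesis unfolding disk_def Gpt_def by simp
qed

text \<open>\<Psi> is the composite h(g(a_1, ..., a_N, z)) of series in the single variable z.\<close>

lemma Gpt_unary_series:
  assumes h: "tate av N h" and g: "\<And>i. i < N \<Longrightarrow> tate av (Suc N) (g i)" and a: "a \<in> disk av N"
  obtains \<Psi> where "tate av 1 \<Psi>"
    and "\<And>t. av t \<le> 1 \<Longrightarrow> ser_eval av 1 \<Psi> (\<lambda>_. t) = ser_eval av N h (Gpt av N g a t)"
proof -
  define line where "line j = (if j < N then ser_const (a j) else ser_var 0)" for j
  have line: "tate av 1 (line j)" for j
    unfolding line_def using disk_av_le_1[OF a] by (auto intro: tate_const tate_var)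
  have line_eval: "ser_eval av 1 (line j) (\<lambda>_. t) = (if j < N then a j else if j = N then t else 0)"
    if "av t \<le> 1" "j < Suc N" for j t
    unfolding line_def using that disk_av_le_1[OF a] by (auto simp: ser_eval_const ser_eval_var)
  define G where "G i = ser_subst av (Suc N) (g i) line" for i
  have G: "tate av 1 (G i)" if "i < N" for i unfolding G_def
    by (rule tate_subst[OF g[OF that] line])
  have G_eval: "ser_eval av 1 (G i) (\<lambda>_. t) = Gpt av N g a t i" if "i < N" "av t \<le> 1" for i t
  proof -
    have "ser_eval av 1 (G i) (\<lambda>_. t)
        = ser_eval av (Suc N) (g i) (\<lambda>j. ser_eval av 1 (line j) (\<lambda>_. t))"
      unfolding G_def using that by (intro ser_eval_subst[OF g line]) auto
    also have "\<dots> = ser_eval av (Suc N) (g i) (\<lambda>j. if j < N then a j else if j = N then t else 0)"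
      by (rule ser_eval_cong) (rule line_eval[OF that(2)])
    also have "\<dots> = Gpt av N g a t i" using that(1) by (simp add: Gpt_def)
    finally show ?thesis .
  qed
  show thesis
  proof (rule that)
    show "tate av 1 (ser_subst av N h G)" by (rule tate_subst[OF h G])
    fix t :: 'k assume t: "av t \<le> 1"
    have "ser_eval av 1 (ser_subst av N h G) (\<lambda>_. t) =
      ser_eval av N h (\<lambda>i. ser_eval av 1 (G i) (\<lambda>_. t))"
      using t by (intro ser_eval_subst[OF h G]) auto
    also have "\<dots> = ser_eval av N h (Gpt av N g a t)" by (rule ser_eval_cong) (rule G_eval[OF _ t])
    finally show "ser_eval av 1 (ser_subst av N h G) (\<lambda>_. t) = ser_eval av N h (Gpt av N g a t)" .
  qed
qed

lemma Gpt_orbit_dist: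
  assumes F: "\<And>i. i < N \<Longrightarrow> tate av N (F i)" and g: "\<And>i. i < N \<Longrightarrow> tate av (Suc N) (g i)"
    and a: "a \<in> disk av N"
    and close: "tuple_gnorm av N N (\<lambda>i \<beta>. ser_subst av (Suc N) (g i) (zsub N (of_nat n)) \<beta>
                                        - ser_iter av N F n i \<beta>) \<le> d"
    and i: "i < N"
  shows "av (Gpt av N g a (of_nat n) i - (Fmap av N F ^^ n) a i) \<le> d"
proof -
  have a1: "\<And>j. j < N \<Longrightarrow> av (a j) \<le> 1" using disk_av_le_1[OF a] .
  define S where "S j = ser_subst av (Suc N) (g j) (zsub N (of_nat n))" for j
  have zsub: "tate av N (zsub N (of_nat n) j)" for j
    unfolding zsub_def by (auto intro: tate_var tate_const av_of_nat_le_1)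
  have S: "tate av N (S j)" if "j < N" for j unfolding S_def
    by (rule tate_subst[OF g[OF that] zsub])
  have "ser_eval av N (S i) a
      = ser_eval av (Suc N) (g i) (\<lambda>j. ser_eval av N (zsub N (of_nat n) j) a)"
    unfolding S_def by (rule ser_eval_subst[where x = a, OF g[OF i] zsub a1])
  also have "\<dots> = Gpt av N g a (of_nat n) i"
    unfolding Gpt_def zsub_def using i disk_av_le_1[OF a]
    by (auto simp: ser_eval_var ser_eval_const av_of_nat_le_1 intro!: ser_eval_cong)
  finally have S_eval: "ser_eval av N (S i) a = Gpt av N g a (of_nat n) i" .
  have I: "tate av N (ser_iter av N F n i)"
    and I_eval: "ser_eval av N (ser_iter av N F n i) a = (Fmap av N F ^^ n) a i"
    using ser_iter_eval[of N F a n, OF F a] i by auto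
  have le_1: "av (S j \<beta> - ser_iter av N F n j \<beta>) \<le> 1" if "j < N" for j \<beta>
  proof -
    have "tate av N (ser_iter av N F n j)" using ser_iter_eval[of N F a n, OF F a] that by blast
    then show ?thesis by (rule av_diff_le[OF tate_av_le_1[OF S[OF that]] tate_av_le_1])
  qed
  have coeffs: "av (S i \<beta> - ser_iter av N F n i \<beta>) \<le> d" if "\<beta> \<in> multi N" for \<beta>
    using av_le_tuple_gnorm[of N av "\<lambda>j \<beta>. S j \<beta> - ser_iter av N F n j \<beta>", OF le_1 i that] close
    unfolding S_def by simp
  have "0 \<le> d" using coeffs[OF zero_in_multi] nonneg by (rule order_trans[rotated])
  then show ?thesis
    using av_ser_eval_diff_le_coeffs[where x = a, OF S[OF i] I a1 coeffs] S_eval I_eval by simp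
qed

lemma av_ser_eval_Gpt_le:
  assumes h: "tate av N h" and F: "\<And>i. i < N \<Longrightarrow> tate av N (F i)"
    and g: "\<And>i. i < N \<Longrightarrow> tate av (Suc N) (g i)" and a: "a \<in> disk av N"
    and close: "tuple_gnorm av N N (\<lambda>i \<beta>. ser_subst av (Suc N) (g i) (zsub N (of_nat n)) \<beta>
                                        - ser_iter av N F n i \<beta>) \<le> d" "0 \<le> d"
    and zero: "ser_eval av N h ((Fmap av N F ^^ n) a) = 0"
  shows "av (ser_eval av N h (Gpt av N g a (of_nat n))) \<le> d"
proof -
  have dist: "\<And>i. i < N \<Longrightarrow> av (Gpt av N g a (of_nat n) i - (Fmap av N F ^^ n) a i) \<le> d"
    using Gpt_orbit_dist[where F = F and g = g, OF F g a close(1)] .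
  have "av (ser_eval av N h (Gpt av N g a (of_nat n)) - ser_eval av N h ((Fmap av N F ^^ n) a)) \<le> d"
    using Gpt_in_disk[of N g a "of_nat n", OF g a av_of_nat_le_1] ser_iter_eval[of N F a n, OF F a]
    by (intro av_ser_eval_diff_le[OF h _ _ dist close(2)]) (auto intro: disk_av_le_1)
  then show ?thesis using zero by simp
qed

section \<open>Small values of one-variable series\<close>

lemma av_complete_hsym_le_1: "(\<And>z. z \<in> set zs \<Longrightarrow> av z \<le> 1) \<Longrightarrow> av (complete_hsym k zs) \<le> 1"
proof (induction k zs rule: complete_hsym.induct)
  case (1 zs) then show ?case by simp
next
  case (2 k) then show ?case by simp
next
  case (3 k x zs)
  have a: "av (x * complete_hsym k (x # zs)) \<le> 1" using 3 by (intro av_mult_le_1) auto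
  have b: "av (complete_hsym (Suc k) zs) \<le> 1" using 3 by auto
  show ?case using av_add_le[OF a b] by simp
qed

lemma av_divdiff_le:
  assumes "distinct zs" "\<And>z. z \<in> set zs \<Longrightarrow> av (f z) \<le> eps"
    "\<And>z w. z \<in> set zs \<Longrightarrow> w \<in> set zs \<Longrightarrow> z \<noteq> w \<Longrightarrow> r \<le> av (z - w)" "r > 0" "eps \<ge> 0"
  shows "av (divdiff f zs) \<le> eps / r ^ (length zs - 1)"
  using assms(1-3)
proof (induction zs rule: list_induct_two_heads)
  case 1 then show ?case using assms(5) by simp
next
  case (2 x) then show ?case by simp
next
  case (3 x y zs)
  have xy: "x \<noteq> y" using "3.prems" by auto
  have A: "av (divdiff f (x # zs)) \<le> eps / r ^ length zs" using "3.IH"(1) "3.prems" by auto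
  have B: "av (divdiff f (y # zs)) \<le> eps / r ^ length zs" using "3.IH"(2) "3.prems" by auto
  have AB: "av (divdiff f (x # zs) - divdiff f (y # zs)) \<le> eps / r ^ length zs"
    using av_diff_le[OF A B] .
  have rxy: "r \<le> av (x - y)" using "3.prems" xy by auto
  have "av (divdiff f (x # y # zs)) = av (divdiff f (x # zs) - divdiff f (y # zs)) / av (x - y)"
    by (simp add: av_divide)
  also have "\<dots> \<le> (eps / r ^ length zs) / r"
  proof (rule frac_le)
    show "0 \<le> eps / r ^ length zs" using assms(4,5) by simp
  qed (use AB assms(4) rxy in auto)
  also have "\<dots> = eps / r ^ (length (x # y # zs) - 1)" by simp
  finally show ?case .
qed

lemma ser_eval_unary_has_av_sum:
  assumes "tate av 1 \<Psi>" "av z \<le> 1"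
  shows "has_av_sum (\<lambda>k. \<Psi> (unary_index k) * z ^ k) UNIV (ser_eval av 1 \<Psi> (\<lambda>_. z))"
proof -
  have "has_av_sum (\<lambda>\<alpha>. \<Psi> \<alpha> * monomial 1 (\<lambda>_. z) \<alpha>) (multi 1) (ser_eval av 1 \<Psi> (\<lambda>_. z))"
    by (rule ser_eval_has_av_sum[OF assms(1)]) (use assms(2) in simp)
  then have "has_av_sum ((\<lambda>\<alpha>. \<Psi> \<alpha> * monomial 1 (\<lambda>_. z) \<alpha>) \<circ> unary_index) UNIV
      (ser_eval av 1 \<Psi> (\<lambda>_. z))"
    using has_av_sum_reindex_bij[OF bij_unary_index] by blast
  then show ?thesis by (simp only: comp_def monomial_unary_index)
qed

lemma av_null_unary_coeffs:
  assumes "tate av 1 \<Psi>" shows "av_null (\<lambda>k. \<Psi> (unary_index k)) UNIV"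
  unfolding av_null_def
proof (intro allI impI)
  fix e :: real assume e: "e > 0"
  have "{k \<in> UNIV. e \<le> av (\<Psi> (unary_index k))} = unary_index -` {\<alpha>. e \<le> av (\<Psi> \<alpha>)}" by auto
  moreover have "finite {\<alpha>. e \<le> av (\<Psi> \<alpha>)}" using assms e unfolding tate_def by blast
  moreover have "inj unary_index" using bij_unary_index by (simp add: bij_betw_def)
  ultimately show "finite {k \<in> UNIV. e \<le> av (\<Psi> (unary_index k))}" using finite_vimageI by metis
qed

lemma exists_weierstrass_degree:
  fixes b :: "nat \<Rightarrow> 'k"
  assumes b: "av_null b UNIV" and "b k0 \<noteq> 0"
  obtains e where "b e \<noteq> 0" "\<And>k. av (b k) \<le> av (b e)" "\<And>k. e < k \<Longrightarrow> av (b k) < av (b e)"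
proof -
  define A where "A = {k. av (b k0) \<le> av (b k)}"
  have A: "finite A" "k0 \<in> A"
    using b av_pos[OF \<open>b k0 \<noteq> 0\<close>] unfolding av_null_def A_def by simp_all
  define lam where "lam = Max ((\<lambda>k. av (b k)) ` A)"
  have le_lam: "av (b k) \<le> lam" for k
  proof (cases "k \<in> A")
    case True
    then show ?thesis unfolding lam_def using A(1) by (intro Max_ge) auto
  next
    case False
    have "av (b k0) \<le> lam" unfolding lam_def using A by (intro Max_ge) auto
    then show ?thesis using False unfolding A_def by simp
  qed
  define E where "E = {k\<in>A. av (b k) = lam}"
  have "lam \<in> (\<lambda>k. av (b k)) ` A" unfolding lam_def using A by (intro Max_in) auto
  then have E: "finite E" "E \<noteq> {}" using A(1) unfolding E_def by auto
  define e where "e = Max E"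
  have e: "av (b e) = lam" "e \<in> A" using Max_in[OF E] unfolding e_def E_def by auto
  have "av (b k) < lam" if "e < k" for k
  proof (rule ccontr)
    assume "\<not> av (b k) < lam"
    then have "k \<in> E" using le_lam[of k] le_lam[of k0] e(2) unfolding E_def A_def by simp
    then show False using Max_ge[OF E(1)] that unfolding e_def by fastforce
  qed
  moreover have "b e \<noteq> 0"
  proof
    assume "b e = 0"
    then show False using e(2) av_pos[OF \<open>b k0 \<noteq> 0\<close>] unfolding A_def by simp
  qed
  ultimately show thesis using that e(1) le_lam by simp
qed

lemma av_tail_less:
  assumes b: "av_null b UNIV" and sum: "has_av_sum (\<lambda>k. b k * z ^ k) UNIV \<Phi>" and z: "av z \<le> 1"
    and tail: "\<And>k. D < k \<Longrightarrow> av (b k) < \<delta>" and \<delta>: "\<delta> > 0"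
  shows "av (\<Phi> - (\<Sum>k\<le>D. b k * z ^ k)) < \<delta>"
proof -
  define p where "p k = (if k \<le> D then b k * z ^ k else 0)" for k
  have "has_av_sum p {..D} (\<Sum>k\<le>D. b k * z ^ k)"
    using has_av_sum_finite[of "{..D}" p] by (simp add: p_def)
  then have "has_av_sum p UNIV (\<Sum>k\<le>D. b k * z ^ k)"
    by (rule has_av_sum_mono_neutral[THEN iffD2, rotated 2]) (auto simp: p_def)
  from has_av_sum_diff[OF sum this]
  have diff: "has_av_sum (\<lambda>k. b k * z ^ k - p k) UNIV (\<Phi> - (\<Sum>k\<le>D. b k * z ^ k))" .
  have le: "av (b k * z ^ k - p k) \<le> av (b k)" for k
    using av_power_le_1[OF z, of k] nonneg by (simp add: p_def av_mult mult_left_le)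
  have "av_null (\<lambda>k. b k * z ^ k - p k) UNIV" by (rule av_null_mono[OF b le])
  moreover have "av (b k * z ^ k - p k) < \<delta>" for k
    using le[of k] tail[of k] \<delta> by (cases "k \<le> D") (auto simp: p_def)
  ultimately show ?thesis using has_av_sum_av_less[OF _ diff _ \<delta>] by blast
qed

text \<open>On e + 1 nodes in the unit disk the divided difference of z^k vanishes for k < e,
  equals 1 for k = e and has absolute value at most 1 for k > e.\<close>

lemma av_divdiff_poly:
  assumes lead: "\<And>k. e < k \<Longrightarrow> av (b k) < av (b e)" and "e \<le> D"
    and zs: "distinct zs" "length zs = e + 1" "\<And>z. z \<in> set zs \<Longrightarrow> av z \<le> 1"
  shows "av (divdiff (\<lambda>z. \<Sum>k\<le>D. b k * z ^ k) zs) = av (b e)"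
proof -
  have "zs \<noteq> []" using zs(2) by auto
  then have dd: "divdiff (\<lambda>z. z ^ k) zs = (if e \<le> k then complete_hsym (k - e) zs else 0)" for k
    using divdiff_power[OF zs(1), of k] zs(2) by auto
  have "divdiff (\<lambda>z. \<Sum>k\<le>D. b k * z ^ k) zs = (\<Sum>k\<le>D. b k * divdiff (\<lambda>z. z ^ k) zs)"
    by (rule divdiff_sum)
  also have "\<dots> = b e + (\<Sum>k\<in>{..D} - {e}. b k * divdiff (\<lambda>z. z ^ k) zs)"
    using \<open>e \<le> D\<close> dd[of e] by (subst sum.remove[of "{..D}" e]) auto
  finally have eq: "divdiff (\<lambda>z. \<Sum>k\<le>D. b k * z ^ k) zs
                  = b e + (\<Sum>k\<in>{..D} - {e}. b k * divdiff (\<lambda>z. z ^ k) zs)" .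
  have pos: "av (b e) > 0" using lead[of "Suc e"] nonneg[of "b (Suc e)"] by linarith
  have "av (\<Sum>k\<in>{..D} - {e}. b k * divdiff (\<lambda>z. z ^ k) zs) < av (b e)"
  proof (rule av_sum_less[OF pos])
    fix k assume k: "k \<in> {..D} - {e}"
    show "av (b k * divdiff (\<lambda>z. z ^ k) zs) < av (b e)"
    proof (cases "e \<le> k")
      case True
      then have "av (b k * divdiff (\<lambda>z. z ^ k) zs) \<le> av (b k)"
        using dd[of k] av_complete_hsym_le_1[where k = "k - e", OF zs(3)] nonneg
        by (simp add: av_mult mult_left_le)
      also have "\<dots> < av (b e)" using True k lead by auto
      finally show ?thesis .
    qed (use dd pos in simp)
  qed
  then show ?thesis using eq av_add_dominant by simp
qed

text \<open>Truncate the series to a polynomial P whose omitted coefficients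
  are smaller than min eps |b e|; the e-th divided difference of P at the points then has
  absolute value |b e| and is at most eps / r^e.\<close>

lemma av_small_values_bound:
  assumes b: "av_null b UNIV" and lead: "\<And>k. e < k \<Longrightarrow> av (b k) < av (b e)"
    and \<Phi>: "\<And>z. av z \<le> 1 \<Longrightarrow> has_av_sum (\<lambda>k. b k * z ^ k) UNIV (\<Phi> z)"
    and zs: "distinct zs" "length zs = e + 1" "\<And>z. z \<in> set zs \<Longrightarrow> av z \<le> 1"
    and small: "\<And>z. z \<in> set zs \<Longrightarrow> av (\<Phi> z) \<le> eps" "eps > 0"
    and sep: "\<And>z w. z \<in> set zs \<Longrightarrow> w \<in> set zs \<Longrightarrow> z \<noteq> w \<Longrightarrow> r \<le> av (z - w)" "r > 0"
  shows "av (b e) * r ^ e \<le> eps"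
proof -
  define \<delta> where "\<delta> = min eps (av (b e))"
  have "\<delta> > 0"
    using small(2) lead[of "Suc e"] nonneg[of "b (Suc e)"] unfolding \<delta>_def by linarith
  then obtain D0 where D0: "\<And>k. \<delta> \<le> av (b k) \<Longrightarrow> k \<le> D0"
    using b unfolding av_null_def finite_nat_set_iff_bounded_le by auto
  have tail: "av (b k) < \<delta>" if "max e D0 < k" for k
    using D0[of k] that by (cases "\<delta> \<le> av (b k)") auto
  define P where "P z = (\<Sum>k\<le>max e D0. b k * z ^ k)" for z
  have P_small: "av (P z) \<le> eps" if z: "z \<in> set zs" for z
  proof -
    have "av (\<Phi> z - P z) < \<delta>"
      unfolding P_def by (rule av_tail_less[OF b \<Phi> zs(3) tail \<open>\<delta> > 0\<close>]) (use z zs(3) in auto)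
    then have "av (P z - \<Phi> z) \<le> eps" by (simp add: av_diff_commute \<delta>_def)
    then show ?thesis using av_add_le[OF small(1)[OF z]] by fastforce
  qed
  have "av (divdiff P zs) \<le> eps / r ^ (length zs - 1)"
    using av_divdiff_le[OF zs(1) P_small sep less_imp_le[OF small(2)]] .
  moreover have "av (divdiff P zs) = av (b e)"
    unfolding P_def by (rule av_divdiff_poly[where b = b and e = e, OF lead max.cobounded1 zs])
  ultimately show ?thesis using sep(2) zs(2) by (simp add: pos_le_divide_eq)
qed

lemma unary_small_values_bound:
  assumes \<Psi>: "tate av 1 \<Psi>" and nonzero: "av z0 \<le> 1" "ser_eval av 1 \<Psi> (\<lambda>_. z0) \<noteq> 0"
  obtains e lam where "lam > 0"
    and "\<And>zs eps r. distinct zs \<Longrightarrow> length zs = e + 1 \<Longrightarrow> (\<And>z. z \<in> set zs \<Longrightarrow> av z \<le> 1) \<Longrightarrow>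
           (\<And>z. z \<in> set zs \<Longrightarrow> av (ser_eval av 1 \<Psi> (\<lambda>_. z)) \<le> eps) \<Longrightarrow> eps > 0 \<Longrightarrow>
           (\<And>z w. z \<in> set zs \<Longrightarrow> w \<in> set zs \<Longrightarrow> z \<noteq> w \<Longrightarrow> r \<le> av (z - w)) \<Longrightarrow> r > 0 \<Longrightarrow>
           lam * r ^ e \<le> eps"
proof -
  define b where "b k = \<Psi> (unary_index k)" for k
  have b: "av_null b UNIV" unfolding b_def by (rule av_null_unary_coeffs[OF \<Psi>])
  have sum: "has_av_sum (\<lambda>k. b k * z ^ k) UNIV (ser_eval av 1 \<Psi> (\<lambda>_. z))" if "av z \<le> 1" for z
    unfolding b_def by (rule ser_eval_unary_has_av_sum[OF \<Psi> that])
  have "\<exists>k0. b k0 \<noteq> 0"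
  proof (rule ccontr)
    assume "\<nexists>k0. b k0 \<noteq> 0"
    then have "has_av_sum (\<lambda>k. b k * z0 ^ k) UNIV 0" using has_av_sum_0 by simp
    then show False using has_av_sum_unique[OF sum[OF nonzero(1)]] nonzero(2) by blast
  qed
  then obtain e where "b e \<noteq> 0" and lead: "\<And>k. e < k \<Longrightarrow> av (b k) < av (b e)"
    using exists_weierstrass_degree[OF b] by blast
  show thesis
    using that[of "av (b e)" e] av_pos[OF \<open>b e \<noteq> 0\<close>] av_small_values_bound[OF b lead sum] by blast
qed

text \<open>Distinct integers 0 <= i, j <= n are at distance at least 1/n, so e + 1 integers in [t, n]
  at which the series is smaller than exp(-c t) force n^e to be exponentially large in t.\<close>

lemma count_small_values_smallo:
  assumes av_nat: "\<And>m. 1 \<le> m \<Longrightarrow> 1 / real m \<le> av (of_nat m)"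
    and \<Psi>: "tate av 1 \<Psi>" "ser_eval av 1 \<Psi> (\<lambda>_. of_nat n0) \<noteq> 0" and c: "c > 0"
    and small: "\<And>i. i \<in> T \<Longrightarrow> av (ser_eval av 1 \<Psi> (\<lambda>_. of_nat i)) \<le> exp (- (c * real i))"
  shows "(\<lambda>n. real (count_upto T n)) \<in> o(\<lambda>n. (ln ^^ Suc m) (real n))"
proof -
  obtain lam e where lam: "lam > 0"
    and bound: "\<And>zs eps r. distinct zs \<Longrightarrow> length zs = e + 1 \<Longrightarrow> (\<And>z. z \<in> set zs \<Longrightarrow> av z \<le> 1) \<Longrightarrow>
           (\<And>z. z \<in> set zs \<Longrightarrow> av (ser_eval av 1 \<Psi> (\<lambda>_. z)) \<le> eps) \<Longrightarrow> eps > 0 \<Longrightarrow>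
           (\<And>z w. z \<in> set zs \<Longrightarrow> w \<in> set zs \<Longrightarrow> z \<noteq> w \<Longrightarrow> r \<le> av (z - w)) \<Longrightarrow> r > 0 \<Longrightarrow>
           lam * r ^ e \<le> eps"
    by (rule unary_small_values_bound[OF \<Psi>(1) av_of_nat_le_1 \<Psi>(2)]) blast
  have "lam * exp (c * real t) \<le> real n ^ e"
    if t: "t \<in> T" and n: "1 \<le> n" and card: "e + 1 \<le> card (T \<inter> {t..n})" for t n
  proof -
    obtain Z where Z: "Z \<subseteq> T \<inter> {t..n}" "card Z = e + 1" "finite Z"
      using obtain_subset_with_card_n[OF card] by blast
    define zs where "zs = map (of_nat :: nat \<Rightarrow> 'k) (sorted_list_of_set Z)"
    have sep: "1 / real n \<le> av (of_nat i - of_nat j :: 'k)" if "i \<in> Z" "j \<in> Z" "i \<noteq> j" for i j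
    proof -
      have "i \<le> n" "j \<le> n" using that(1,2) Z(1) by auto
      with av_nat that(3) show ?thesis by (rule av_of_nat_diff_ge)
    qed
    have "inj_on (of_nat :: nat \<Rightarrow> 'k) Z"
      using sep n by (intro inj_onI) (fastforce simp: av_0)
    then have zs: "distinct zs" "length zs = e + 1" "set zs = of_nat ` Z"
      unfolding zs_def using Z(2,3) by (simp_all add: distinct_map)
    have "av (ser_eval av 1 \<Psi> (\<lambda>_. of_nat i)) \<le> exp (- (c * real t))" if "i \<in> Z" for i
    proof -
      have "i \<in> T" "t \<le> i" using that Z(1) by auto
      then have "exp (- (c * real i)) \<le> exp (- (c * real t))"
        using c by (simp add: mult_le_cancel_left_pos)
      then show ?thesis using small[OF \<open>i \<in> T\<close>] by linarith
    qed
    then have "lam * (1 / real n) ^ e \<le> exp (- (c * real t))"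
      using n zs by (intro bound) (auto simp: av_of_nat_le_1 intro: sep)
    then show ?thesis using n by (simp add: power_divide divide_le_eq exp_minus field_simps)
  qed
  then show ?thesis by (rule count_upto_smallo_iterated_ln[OF lam c])
qed

end

theorem proposition4p2:
  fixes av :: "'k::field \<Rightarrow> real" and p N :: nat and F g :: "nat \<Rightarrow> 'k ser"
    and V :: "(nat \<Rightarrow> 'k) set" and a :: "nat \<Rightarrow> 'k" and A :: "nat \<Rightarrow> nat \<Rightarrow> 'k"
    and c :: real
  assumes "prime p" and "p \<ge> 3" and "nonarch_local_field av p" and "N \<ge> 2"
    and "analytic_subvariety av N V"
    and "a \<in> disk av N" and "\<forall>i<N. av (a i) < 1"
    and "\<forall>i<N. tate av N (F i)"
    and "\<forall>i<N. \<forall>j<N. av (A i j) \<le> 1"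
    and "\<forall>i<N. \<forall>\<beta>. av (F i \<beta> - lin_ser N A i \<beta>) < 1"
    and "\<forall>i<N. \<forall>j<N. (\<Sum>k<N. A i k * A k j) = A i j"
    and "c > 1 / (real p - 1)"
    and "\<forall>i<N. tate av (Suc N) (g i)"
    and "\<forall>n::nat. tuple_gnorm av N N
           (\<lambda>i \<beta>. ser_subst av (Suc N) (g i) (zsub N (of_nat n)) \<beta> - ser_iter av N F n i \<beta>)
         \<le> real p powr (- (real n * c))"
    and "\<not> (\<exists>M. \<forall>n\<ge>M. Gpt av N g a (of_nat n) \<in> V)"
    and "\<forall>n>0. \<not> (\<exists>q. q \<in> V \<and> (\<exists>r>0. (Fmap av N F ^^ r) q = q) \<and>
                    (\<lambda>k. pt_dist av N ((Fmap av N F ^^ (n * k)) a) q) \<longlonglongrightarrow> 0)"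
  shows "\<forall>m>0. (\<lambda>n. real (card {i. i \<le> n \<and> (Fmap av N F ^^ i) a \<in> V}))
                 \<in> o(\<lambda>n. (ln ^^ m) (real n))"
proof -
  interpret complete_nonarch_abs av by (rule complete_nonarch_abs_if_local_field[OF assms(3)])
  have av_nat: "\<And>m. 1 \<le> m \<Longrightarrow> 1 / real m \<le> av (of_nat m)"
    using av_of_nat_ge[OF assms(1)] assms(3) unfolding nonarch_local_field_def by simp
  have F: "\<And>i. i < N \<Longrightarrow> tate av N (F i)" and g: "\<And>i. i < N \<Longrightarrow> tate av (Suc N) (g i)"
    using assms(8,13) by blast+
  obtain H where H: "\<And>h. h \<in> H \<Longrightarrow> tate av N h" "V = {x \<in> disk av N. \<forall>h\<in>H. ser_eval av N h x = 0}"
    using assms(5) unfolding analytic_subvariety_def by blast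
  obtain n0 where "Gpt av N g a (of_nat n0) \<notin> V" using assms(15) by blast
  then obtain h where h: "h \<in> H" "ser_eval av N h (Gpt av N g a (of_nat n0)) \<noteq> 0"
    using Gpt_in_disk[of N g a "of_nat n0", OF g assms(6) av_of_nat_le_1] H(2) by blast
  obtain \<Psi> where \<Psi>: "tate av 1 \<Psi>"
    "\<And>t. av t \<le> 1 \<Longrightarrow> ser_eval av 1 \<Psi> (\<lambda>_. t) = ser_eval av N h (Gpt av N g a t)"
    using Gpt_unary_series[of N h g a, OF H(1)[OF h(1)] g assms(6)] by blast
  have "0 < 1 / (real p - 1)" using assms(2) by simp
  then have "c > 0" using assms(12) by linarith
  then have c: "c * ln (real p) > 0" using assms(2) by simp
  have small: "av (ser_eval av 1 \<Psi> (\<lambda>_. of_nat i)) \<le> exp (- (c * ln (real p) * real i))"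
    if "i \<in> {i. (Fmap av N F ^^ i) a \<in> V}" for i
    using that h(1) H(2) \<Psi>(2)[OF av_of_nat_le_1] assms(2)
      av_ser_eval_Gpt_le[where F = F and g = g, OF H(1)[OF h(1)] F g assms(6) assms(14)[rule_format]]
    by (simp add: powr_def algebra_simps)
  have "(\<lambda>n. real (count_upto {i. (Fmap av N F ^^ i) a \<in> V} n)) \<in> o(\<lambda>n. (ln ^^ Suc m) (real n))"
    for m using h(2) \<Psi>(2)[OF av_of_nat_le_1]
    by (intro count_small_values_smallo[OF av_nat \<Psi>(1) _ c small]) simp_all
  then show ?thesis unfolding count_upto_def by (auto simp: gr0_conv_Suc)
qed

end
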